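(* Let $P$ be a finite poset, $P^*\subseteq P$ a set of marked elements with $\min(P)\cup\max(P)\subseteq P^*$, and $\lambda\colon P^*\to\mathbb{Z}$ an integral order-preserving marking such that $(P,\lambda)$ is regular. The following are equivalent: (i) $P$ is a ranked poset and $\lambda=\lambda^r$ for some rank function $r$ of $P$, i.e. $\lambda(a)=r(a)$ for all $a\in P^*$; (ii) for every partition $P\setminus P^*=C\sqcup O$, the polytope $\mathcal{O}_{C,O}(P,\lambda)\subseteq\mathbb{R}^{P\setminus P^*}$ has a unique interior lattice point $\mathbf{u}$, and the translate $\mathcal{O}_{C,O}(P,\lambda)-\mathbf{u}$ is reflexive.
   Context: $p\prec q$ denotes a covering relation. A marked poset $(P,\lambda)$ is regular if for each covering relation $p\prec q$ in $P$ and all $a,b\in P^*$ with $a\le q$ and $p\le b$, we have $a=b$ or $\lambda(a)<\lambda(b)$. A rank function on $P$ is a map $r\colon P\to\mathbb{Z}$ with $r(p)=r(q)-1$ for every covering relation $p\prec q$; $P$ is ranked if one exists. For a partition $P\setminus P^*=C\sqcup O$, $\mathcal{O}_{C,O}(P,\lambda)\subseteq\mathbb{R}^P$ is the set of all $\mathbf{x}$ with: (1) $x_a=\lambda(a)$ for $a\in P^*$; (2) $x_p\ge0$ for $p\in C$; (3) $x_{p_1}+\cdots+x_{p_r}\le x_b-x_a$ for every saturated chain $a\prec p_1\prec\cdots\prec p_r\prec b$ in $P$ with $a,b\in P^*\sqcup O$, all $p_i\in C$, $r\ge0$; it is regarded as a subset of $\mathbb{R}^{P\setminus P^*}$ via projection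 onto unmarked coordinates, with interior and lattice points taken in $\mathbb{R}^{P\setminus P^*}$ and $\mathbb{Z}^{P\setminus P^*}$. A polytope $Q\subseteq\mathbb{R}^n$ is reflexive if $0$ lies in its interior, $Q$ is a lattice polytope, and its polar dual $Q^\circ=\{\alpha\in(\mathbb{R}^n)^*:\alpha(\mathbf{x})\le 1\ \forall\mathbf{x}\in Q\}$ is a lattice polytope. *)

theory Defs
  imports "HOL-Analysis.Analysis"
begin

text \<open>The finite poset P is the finite type 'a with its order. Marked elements: a set
  Pstar; the marking is lam :: 'a => int (only its values on Pstar matter).\<close>

definition covers :: "'a::order \<Rightarrow> 'a \<Rightarrow> bool" where
  "covers p q \<longleftrightarrow> p < q \<and> \<not> (\<exists>z. p < z \<and> z < q)"

definition minimal_elems :: "'a::order set" where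
  "minimal_elems = {p. \<not> (\<exists>q. q < p)}"

definition maximal_elems :: "'a::order set" where
  "maximal_elems = {p. \<not> (\<exists>q. p < q)}"

definition order_preserving_marking :: "'a::order set \<Rightarrow> ('a \<Rightarrow> int) \<Rightarrow> bool" where
  "order_preserving_marking Pstar lam \<longleftrightarrow>
     (\<forall>a\<in>Pstar. \<forall>b\<in>Pstar. a \<le> b \<longrightarrow> lam a \<le> lam b)"

definition regular_marked :: "'a::order set \<Rightarrow> ('a \<Rightarrow> int) \<Rightarrow> bool" where
  "regular_marked Pstar lam \<longleftrightarrow>
     (\<forall>p q. covers p q \<longrightarrow>
        (\<forall>a\<in>Pstar. \<forall>b\<in>Pstar. a \<le> q \<longrightarrow> p \<le> b \<longrightarrow> a = b \<or> lam a < lam b))"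

definition rank_function :: "('a::order \<Rightarrow> int) \<Rightarrow> bool" where
  "rank_function r \<longleftrightarrow> (\<forall>p q. covers p q \<longrightarrow> r p = r q - 1)"

definition ranked :: "'a::order itself \<Rightarrow> bool" where
  "ranked _ \<longleftrightarrow> (\<exists>r::'a \<Rightarrow> int. rank_function r)"

fun cover_chain :: "'a::order list \<Rightarrow> bool" where
  "cover_chain [] = True"
| "cover_chain [x] = True"
| "cover_chain (x # y # zs) = (covers x y \<and> cover_chain (y # zs))"

definition marked_chain_order_polytope_full ::
  "('a::{finite,order}) set \<Rightarrow> ('a \<Rightarrow> int) \<Rightarrow> 'a set \<Rightarrow> 'a set \<Rightarrow> ((real, 'a) vec) set" where
  "marked_chain_order_polytope_full Pstar lam C Op =
     {x. (\<forall>a\<in>Pstar. x $ a = of_int (lam a))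
       \<and> (\<forall>p\<in>C. 0 \<le> x $ p)
       \<and> (\<forall>a b ps. a \<in> Pstar \<union> Op \<longrightarrow> b \<in> Pstar \<union> Op \<longrightarrow> set ps \<subseteq> C \<longrightarrow>
              cover_chain (a # ps @ [b]) \<longrightarrow>
              sum_list (map (\<lambda>p. x $ p) ps) \<le> x $ b - x $ a)}"

text \<open>R^{P \ P*} is realised as the coordinate subspace of (real, 'a) vec where all marked
  coordinates vanish; projection onto the unmarked coordinates.\<close>
definition unmarked_space :: "'a::finite set \<Rightarrow> ((real, 'a) vec) set" where
  "unmarked_space Pstar = {y. \<forall>a\<in>Pstar. y $ a = 0}"

definition proj_unmarked :: "'a::finite set \<Rightarrow> (real, 'a) vec \<Rightarrow> (real, 'a) vec" where
  "proj_unmarked Pstar x = (\<chi> i. if i \<in> Pstar then 0 else x $ i)"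

definition marked_chain_order_polytope ::
  "('a::{finite,order}) set \<Rightarrow> ('a \<Rightarrow> int) \<Rightarrow> 'a set \<Rightarrow> 'a set \<Rightarrow> ((real, 'a) vec) set" where
  "marked_chain_order_polytope Pstar lam C Op =
     proj_unmarked Pstar ` marked_chain_order_polytope_full Pstar lam C Op"

definition integral_vec :: "(real, 'a::finite) vec \<Rightarrow> bool" where
  "integral_vec x \<longleftrightarrow> (\<forall>i. x $ i \<in> \<int>)"

text \<open>Interior taken inside the ambient space R^{P \ P*}.\<close>
definition interior_in :: "'a::finite set \<Rightarrow> ((real, 'a) vec) set \<Rightarrow> ((real, 'a) vec) set" where
  "interior_in Pstar Q = (top_of_set (unmarked_space Pstar)) interior_of Q"

definition lattice_polytope :: "((real, 'a::finite) vec) set \<Rightarrow> bool" where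
  "lattice_polytope Q \<longleftrightarrow> (\<exists>V. finite V \<and> (\<forall>v\<in>V. integral_vec v) \<and> Q = convex hull V)"

text \<open>Polar dual: linear functionals on R^{P \ P*}, represented by vectors in that space
  via the standard inner product.\<close>
definition polar_dual :: "'a::finite set \<Rightarrow> ((real, 'a) vec) set \<Rightarrow> ((real, 'a) vec) set" where
  "polar_dual Pstar Q = {\<alpha> \<in> unmarked_space Pstar. \<forall>x\<in>Q. \<alpha> \<bullet> x \<le> 1}"

definition reflexive_polytope :: "'a::finite set \<Rightarrow> ((real, 'a) vec) set \<Rightarrow> bool" where
  "reflexive_polytope Pstar Q \<longleftrightarrow>
     0 \<in> interior_in Pstar Q \<and> lattice_polytope Q \<and> lattice_polytope (polar_dual Pstar Q)"

end

theory Submission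
  imports Defs
begin

(*
  The polytope lives in the space of unmarked coordinates and is cut out there by finitely many
  inequalities c . x <= 0: c = -e_p for p in C, and c = e_a + e_p1 + ... + e_pr - e_b for each
  saturated chain a < p1 < ... < pr < b through C.  Its vertices are integral: at a non-integral
  point, moving all values of Stanley's transfer map with one fractional part by the same amount
  keeps every tight inequality tight.

  If lambda is the restriction of a rank function r, the point u with u = 1 on C and u = r on O has
  slack exactly 1 in every inequality.  Hence Q - u = {y. c' . y <= 1} with integral c', whose
  polar dual conv (0, c') is a lattice polytope.  An interior lattice point has slack at least 1
  everywhere, and summing these slacks along a maximal chain through an element shows that it
  coincides with u.

  Conversely take C empty, let u be the unique interior lattice point and p < q a cover.  A point
  of the polytope at which only the inequality x_p <= x_q is tight shows that
  (e_p - e_q) / (u_q - u_p) is a vertex of the polar dual of Q - u.  The vertex is integral, so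
  u_q - u_p = 1, so u extends lambda to a rank function.
*)

section \<open>Polyhedra inside a linear subspace\<close>

lemma tight_direction_perturbation:
  fixes N :: "'v::real_inner set"
  assumes "finite N" "\<forall>c\<in>N. c \<bullet> x \<le> 0" "\<forall>c\<in>N. c \<bullet> x = 0 \<longrightarrow> c \<bullet> w = 0"
  obtains d where "d > 0" "\<And>\<tau>. \<bar>\<tau>\<bar> \<le> d \<Longrightarrow> \<forall>c\<in>N. c \<bullet> (x + \<tau> *\<^sub>R w) \<le> 0"
proof -
  have "\<forall>\<^sub>F \<tau> in nhds 0. c \<bullet> (x + \<tau> *\<^sub>R w) \<le> 0" if "c \<in> N" for c
  proof (cases "c \<bullet> x = 0")
    case False
    then have "c \<bullet> x < 0" using assms(2) that by force
    moreover have "((\<lambda>\<tau>. c \<bullet> x + \<tau> * (c \<bullet> w)) \<longlongrightarrow> c \<bullet> x + 0 * (c \<bullet> w)) (nhds 0)"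
      by (intro tendsto_intros filterlim_ident)
    ultimately have "\<forall>\<^sub>F \<tau> in nhds 0. c \<bullet> x + \<tau> * (c \<bullet> w) < 0"
      by (auto dest: order_tendstoD)
    then show ?thesis
      by eventually_elim (simp add: inner_add_right)
  qed (use assms(3) that in \<open>simp add: inner_add_right\<close>)
  then have "\<forall>\<^sub>F \<tau> in nhds 0. \<forall>c\<in>N. c \<bullet> (x + \<tau> *\<^sub>R w) \<le> 0"
    using assms(1) by (simp add: eventually_ball_finite)
  then show thesis
    using that unfolding eventually_nhds_metric_le by (auto simp: dist_real_def)
qed

lemma not_extreme_point_if_tight_direction:
  fixes N :: "'v::real_inner set"
  assumes "subspace U" "finite N" "y \<in> U" "\<forall>c\<in>N. c \<bullet> (x0 + y) \<le> 0"
    and "w \<in> U" "w \<noteq> 0" "\<forall>c\<in>N. c \<bullet> (x0 + y) = 0 \<longrightarrow> c \<bullet> w = 0"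
  shows "\<not> y extreme_point_of {y \<in> U. \<forall>c\<in>N. c \<bullet> (x0 + y) \<le> 0}"
proof
  let ?S = "{y \<in> U. \<forall>c\<in>N. c \<bullet> (x0 + y) \<le> 0}"
  obtain d where d: "d > 0" "\<And>\<tau>. \<bar>\<tau>\<bar> \<le> d \<Longrightarrow> \<forall>c\<in>N. c \<bullet> (x0 + y + \<tau> *\<^sub>R w) \<le> 0"
    using tight_direction_perturbation[OF assms(2,4,7)] by blast
  have in_S: "y + \<tau> *\<^sub>R w \<in> ?S" if "\<bar>\<tau>\<bar> \<le> d" for \<tau>
    using d(2)[OF that] assms(1,3,5) by (simp add: subspace_add subspace_scale add.assoc)
  have "(y + d *\<^sub>R w) - (y - d *\<^sub>R w) = 2 *\<^sub>R (d *\<^sub>R w)"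
    by (simp only: scaleR_2) simp
  then have "y - d *\<^sub>R w \<noteq> y + d *\<^sub>R w"
    using d(1) assms(6) by force
  moreover have "midpoint (y - d *\<^sub>R w) (y + d *\<^sub>R w) = y"
    unfolding midpoint_eq_iff by simp
  ultimately have "y \<in> open_segment (y - d *\<^sub>R w) (y + d *\<^sub>R w)"
    by (metis midpoint_in_open_segment)
  moreover have "y - d *\<^sub>R w \<in> ?S" "y + d *\<^sub>R w \<in> ?S"
    using in_S[of "- d"] in_S[of d] d(1) by auto
  ultimately show "y extreme_point_of ?S \<Longrightarrow> False"
    unfolding extreme_point_of_def by blast
qed

lemma interior_of_halfspaces_in_subspace:
  fixes N :: "'v::euclidean_space set"
  assumes "subspace U" "finite N" "\<And>c. c \<in> N \<Longrightarrow> \<exists>w\<in>U. 0 < c \<bullet> w"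
  shows "top_of_set U interior_of {y \<in> U. \<forall>c\<in>N. c \<bullet> (x0 + y) \<le> 0}
    = {y \<in> U. \<forall>c\<in>N. c \<bullet> (x0 + y) < 0}" (is "_ = ?T")
proof
  have "?T = U \<inter> (\<Inter>c\<in>N. {y. c \<bullet> (x0 + y) < 0})"
    by auto
  moreover have "open (\<Inter>c\<in>N. {y. c \<bullet> (x0 + y) < 0})"
    using assms(2) by (intro open_INT ballI open_Collect_less continuous_intros)
  ultimately have "openin (top_of_set U) ?T"
    by (simp add: openin_open_Int)
  then show "?T \<subseteq> top_of_set U interior_of {y \<in> U. \<forall>c\<in>N. c \<bullet> (x0 + y) \<le> 0}"
    by (rule interior_of_maximal[rotated]) auto
next
  show "top_of_set U interior_of {y \<in> U. \<forall>c\<in>N. c \<bullet> (x0 + y) \<le> 0} \<subseteq> ?T"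
  proof
    fix y assume "y \<in> top_of_set U interior_of {y \<in> U. \<forall>c\<in>N. c \<bullet> (x0 + y) \<le> 0}"
    then obtain T where T: "openin (top_of_set U) T" "y \<in> T" "T \<subseteq> {y \<in> U. \<forall>c\<in>N. c \<bullet> (x0 + y) \<le> 0}"
      unfolding interior_of_def by blast
    then have "y \<in> U" "\<exists>e>0. \<forall>z\<in>U. dist z y < e \<longrightarrow> z \<in> T"
      by (simp_all add: openin_euclidean_subtopology_iff subset_iff)
    then obtain e where y: "y \<in> U" "e > 0"
      and ball: "\<And>z. z \<in> U \<Longrightarrow> dist z y < e \<Longrightarrow> \<forall>c\<in>N. c \<bullet> (x0 + z) \<le> 0"
      using T(3) by blast
    have "c \<bullet> (x0 + y) < 0" if c: "c \<in> N" for c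
    proof -
      obtain w where w: "w \<in> U" "0 < c \<bullet> w" using assms(3)[OF c] by blast
      then have "w \<noteq> 0" by auto
      define t where "t = e / (2 * norm w)"
      have t: "t > 0" "norm (t *\<^sub>R w) < e"
        using \<open>w \<noteq> 0\<close> y(2) by (auto simp: t_def)
      have "c \<bullet> (x0 + (y + t *\<^sub>R w)) \<le> 0"
        using ball[of "y + t *\<^sub>R w"] c t(2) w(1) y(1) assms(1)
        by (simp add: dist_norm subspace_add subspace_scale)
      then have "c \<bullet> (x0 + y) + t * (c \<bullet> w) \<le> 0"
        by (simp add: inner_add_right algebra_simps)
      moreover have "0 < t * (c \<bullet> w)" using t(1) w(2) by simp
      ultimately show ?thesis by linarith
    qed
    then show "y \<in> ?T" using y(1) by blast
  qed
qed

lemma polyhedron_halfspaces_in_subspace: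
  fixes N :: "'v::euclidean_space set"
  assumes "subspace U" "finite N"
  shows "polyhedron {y \<in> U. \<forall>c\<in>N. c \<bullet> (x0 + y) \<le> 0}"
proof -
  have halfspace: "{y. c \<bullet> (x0 + y) \<le> 0} = {y. c \<bullet> y \<le> - (c \<bullet> x0)}" for c
    by (auto simp: inner_add_right)
  have "polyhedron U"
    using polyhedron_affine_hull[of U] assms(1) by (metis affine_hull_eq subspace_imp_affine)
  moreover have "{y \<in> U. \<forall>c\<in>N. c \<bullet> (x0 + y) \<le> 0} = U \<inter> \<Inter>((\<lambda>c. {y. c \<bullet> (x0 + y) \<le> 0}) ` N)"
    by auto
  moreover have "polyhedron (\<Inter>c\<in>N. {y. c \<bullet> (x0 + y) \<le> 0})"
    using assms(2) unfolding halfspace by (intro polyhedron_Inter) (auto simp: polyhedron_halfspace_le)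
  ultimately show ?thesis
    by simp
qed

lemma lattice_polytope_if_extreme_points_integral:
  assumes "polyhedron S" "bounded S" "\<And>x. x extreme_point_of S \<Longrightarrow> integral_vec x"
  shows "lattice_polytope S"
proof -
  have "compact S"
    using assms(1,2) polyhedron_imp_closed by (simp add: compact_eq_bounded_closed)
  then have "S = convex hull {x. x extreme_point_of S}"
    using Krein_Milman_Minkowski polyhedron_imp_convex[OF assms(1)] by blast
  then show ?thesis
    unfolding lattice_polytope_def
    using finite_polyhedron_extreme_points[OF assms(1)] assms(3) by blast
qed

lemma extreme_point_if_unique_maximizer:
  fixes z :: "'v::real_inner"
  assumes "convex S" "\<forall>y\<in>S. y \<bullet> z \<le> 1" "\<And>y. y \<in> S \<Longrightarrow> y \<bullet> z = 1 \<Longrightarrow> y = x"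
    and "x \<in> S" "x \<bullet> z = 1"
  shows "x extreme_point_of S"
proof -
  have "(S \<inter> {y. z \<bullet> y = 1}) face_of S"
    using assms(1,2) inner_commute[of z] by (intro face_of_Int_supporting_hyperplane_le) auto
  moreover have "S \<inter> {y. z \<bullet> y = 1} = {x}"
  proof (intro equalityI subsetI)
    fix y assume "y \<in> S \<inter> {y. z \<bullet> y = 1}"
    then show "y \<in> {x}" using assms(3) by (simp add: inner_commute)
  qed (use assms(4,5) in \<open>simp add: inner_commute\<close>)
  ultimately show ?thesis
    by (simp add: face_of_singleton[symmetric])
qed

lemma multiple_if_nonpos_on_orthogonal:
  fixes l \<beta> :: "'v::real_inner"
  assumes "subspace U" "l \<in> U" "\<beta> \<in> U" "\<And>w. w \<in> U \<Longrightarrow> l \<bullet> w = 0 \<Longrightarrow> \<beta> \<bullet> w \<le> 0"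
  shows "\<beta> = ((\<beta> \<bullet> l) / (l \<bullet> l)) *\<^sub>R l"
proof (cases "l = 0")
  case True
  then have "\<beta> \<bullet> \<beta> \<le> 0" using assms(3,4) by simp
  then show ?thesis using True by (metis inner_eq_zero_iff inner_ge_zero order_antisym scale_zero_right)
next
  case False
  define w where "w = \<beta> - ((\<beta> \<bullet> l) / (l \<bullet> l)) *\<^sub>R l"
  have w: "w \<in> U" "l \<bullet> w = 0"
    using assms(1-3) False by (auto simp: w_def subspace_diff subspace_scale inner_diff_right inner_commute)
  then have "\<beta> \<bullet> w \<le> 0" "\<beta> \<bullet> (- w) \<le> 0"
    using assms(4)[of w] assms(4)[of "- w"] assms(1) by (auto simp: subspace_neg)
  then have "\<beta> \<bullet> w = 0"
    by simp
  then have "w \<bullet> w = 0"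
    using w(2) unfolding w_def by (simp add: inner_diff_left inner_commute)
  then show ?thesis by (simp add: w_def)
qed

section \<open>Strictly monotone extension on a finite preorder\<close>

lemma exists_strict_mono_weight:
  fixes le :: "'a::finite \<Rightarrow> 'a \<Rightarrow> bool"
  assumes "reflp le" "transp le"
  obtains \<theta> :: "'a \<Rightarrow> real" where "\<And>s. 0 < \<theta> s \<and> \<theta> s < 1"
    "\<And>s t. le s t \<Longrightarrow> \<theta> s \<le> \<theta> t" "\<And>s t. le s t \<Longrightarrow> \<not> le t s \<Longrightarrow> \<theta> s < \<theta> t"
proof
  note refl_le = reflpD[OF assms(1)] and trans_le = transpD[OF assms(2)]
  define \<theta> where "\<theta> s = real (card {z. le z s}) / (real CARD('a) + 1)" for s
  show "0 < \<theta> s \<and> \<theta> s < 1" for s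
  proof -
    have "0 < card {z. le z s}"
      using refl_le[of s] by (auto simp: card_gt_0_iff)
    moreover have "card {z. le z s} \<le> CARD('a)"
      by (rule card_mono) auto
    ultimately show ?thesis
      by (simp add: \<theta>_def divide_less_eq)
  qed
  show "\<theta> s \<le> \<theta> t" if "le s t" for s t
  proof -
    have "{z. le z s} \<subseteq> {z. le z t}"
      using trans_le[OF _ that] by blast
    then have "card {z. le z s} \<le> card {z. le z t}"
      by (simp add: card_mono)
    then show ?thesis
      unfolding \<theta>_def by (simp add: divide_right_mono)
  qed
  show "\<theta> s < \<theta> t" if "le s t" "\<not> le t s" for s t
  proof -
    have "{z. le z s} \<subset> {z. le z t}"
      using trans_le[OF _ that(1)] that refl_le by blast
    then have "card {z. le z s} < card {z. le z t}"
      by (simp add: psubset_card_mono)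
    then show ?thesis
      unfolding \<theta>_def by (simp add: divide_strict_right_mono)
  qed
qed

lemma exists_mono_envelopes:
  fixes le :: "'a::finite \<Rightarrow> 'a \<Rightarrow> bool" and f :: "'a \<Rightarrow> real"
  assumes "reflp le" "transp le"
    and below: "\<And>s. \<exists>a\<in>M. le a s" and above: "\<And>s. \<exists>b\<in>M. le s b"
    and mono: "\<And>a b. a \<in> M \<Longrightarrow> b \<in> M \<Longrightarrow> le a b \<Longrightarrow> f a \<le> f b"
    and strict: "\<And>a b. a \<in> M \<Longrightarrow> b \<in> M \<Longrightarrow> le a b \<Longrightarrow> \<not> le b a \<Longrightarrow> f a < f b"
  obtains L U :: "'a \<Rightarrow> real" where "\<And>a. a \<in> M \<Longrightarrow> L a = f a \<and> U a = f a" "\<And>s. L s \<le> U s"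
    "\<And>s t. le s t \<Longrightarrow> L s \<le> L t \<and> U s \<le> U t" "\<And>s t. le s t \<Longrightarrow> \<not> le t s \<Longrightarrow> L s < U t"
proof
  note refl_le = reflpD[OF assms(1)] and trans_le = transpD[OF assms(2)]
  define L where "L s = Max (f ` {a\<in>M. le a s})" for s
  define U where "U s = Min (f ` {b\<in>M. le s b})" for s
  have L_ge: "f a \<le> L s" if "a \<in> M" "le a s" for a s
    unfolding L_def using that by (intro Max_ge) auto
  have U_le: "U s \<le> f b" if "b \<in> M" "le s b" for b s
    unfolding U_def using that by (intro Min_le) auto
  have "L s \<in> f ` {a\<in>M. le a s}" "U s \<in> f ` {b\<in>M. le s b}" for s
    unfolding L_def U_def using below[of s] above[of s] by (intro Max_in Min_in; auto)+
  then obtain lo hi where lo: "lo s \<in> M" "le (lo s) s" "L s = f (lo s)"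
    and hi: "hi s \<in> M" "le s (hi s)" "U s = f (hi s)" for s
    by (simp add: image_iff) metis
  show "L a = f a \<and> U a = f a" if "a \<in> M" for a
    using L_ge[OF that refl_le] mono[OF lo(1) that lo(2)] lo(3)[of a]
      U_le[OF that refl_le] mono[OF that hi(1) hi(2)] hi(3)[of a] by linarith
  show "L s \<le> U s" for s
    using mono[OF lo(1) hi(1) trans_le[OF lo(2) hi(2)]] lo(3) hi(3) by simp
  show "L s \<le> L t \<and> U s \<le> U t" if "le s t" for s t
    using L_ge[OF lo(1) trans_le[OF lo(2) that]] lo(3) U_le[OF hi(1) trans_le[OF that hi(2)]] hi(3)
    by simp
  show "L s < U t" if "le s t" "\<not> le t s" for s t
  proof -
    have "\<not> le (hi t) (lo s)"
      using trans_le[OF trans_le[OF hi(2) _] lo(2)] that(2) by blast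
    then show ?thesis
      using strict[OF lo(1) hi(1)] trans_le[OF lo(2) trans_le[OF that(1) hi(2)]] lo(3) hi(3) by simp
  qed
qed

text \<open>The extension interpolates between the lower and the upper envelope of \<open>f\<close> with a strictly
  increasing weight.\<close>
lemma strict_mono_extension:
  fixes le :: "'a::finite \<Rightarrow> 'a \<Rightarrow> bool" and f :: "'a \<Rightarrow> real"
  assumes "reflp le" "transp le"
    and "\<And>s. \<exists>a\<in>M. le a s" "\<And>s. \<exists>b\<in>M. le s b"
    and "\<And>a b. a \<in> M \<Longrightarrow> b \<in> M \<Longrightarrow> le a b \<Longrightarrow> f a \<le> f b"
    and "\<And>a b. a \<in> M \<Longrightarrow> b \<in> M \<Longrightarrow> le a b \<Longrightarrow> \<not> le b a \<Longrightarrow> f a < f b"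
  shows "\<exists>x. (\<forall>a\<in>M. x a = f a) \<and> (\<forall>s t. le s t \<longrightarrow> x s \<le> x t)
    \<and> (\<forall>s t. le s t \<and> \<not> le t s \<longrightarrow> x s < x t)"
proof -
  obtain \<theta> :: "'a \<Rightarrow> real" where \<theta>: "\<And>s. 0 < \<theta> s \<and> \<theta> s < 1"
    "\<And>s t. le s t \<Longrightarrow> \<theta> s \<le> \<theta> t" "\<And>s t. le s t \<Longrightarrow> \<not> le t s \<Longrightarrow> \<theta> s < \<theta> t"
    using exists_strict_mono_weight[OF assms(1,2)] by blast
  obtain L U :: "'a \<Rightarrow> real" where LU: "\<And>a. a \<in> M \<Longrightarrow> L a = f a \<and> U a = f a" "\<And>s. L s \<le> U s"
    "\<And>s t. le s t \<Longrightarrow> L s \<le> L t \<and> U s \<le> U t" "\<And>s t. le s t \<Longrightarrow> \<not> le t s \<Longrightarrow> L s < U t"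
    using exists_mono_envelopes[where le = le and M = M and f = f, OF assms] by blast
  define x where "x s = L s + \<theta> s * (U s - L s)" for s
  have x_diff: "x t - x s =
      ((L t - L s) * (1 - \<theta> t) + (U t - U s) * \<theta> t) + (\<theta> t - \<theta> s) * (U s - L s)" for s t
    unfolding x_def by (simp add: algebra_simps)
  have envelopes_mono: "0 \<le> (L t - L s) * (1 - \<theta> t) + (U t - U s) * \<theta> t" if "le s t" for s t
    using LU(3)[OF that] \<theta>(1)[of t] by simp
  have "x s \<le> x t" if "le s t" for s t
  proof -
    have "0 \<le> (\<theta> t - \<theta> s) * (U s - L s)"
      using \<theta>(2)[OF that] LU(2)[of s] by simp
    then show ?thesis
      using x_diff[of t s] envelopes_mono[OF that] by linarith
  qed
  moreover have "x s < x t" if st: "le s t" and ts: "\<not> le t s" for s t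
  proof (cases "L s < U s")
    case True
    then have "0 < (\<theta> t - \<theta> s) * (U s - L s)"
      using \<theta>(3)[OF st ts] by simp
    then show ?thesis
      using x_diff[of t s] envelopes_mono[OF st] by linarith
  next
    case False
    then have "x s = L s"
      using LU(2)[of s] by (simp add: x_def)
    moreover have "x t = L t - \<theta> t * L t + \<theta> t * U t"
      by (simp add: x_def algebra_simps)
    moreover have "\<theta> t * L s < \<theta> t * U t" "L s - \<theta> t * L s \<le> L t - \<theta> t * L t"
      using LU(3,4)[OF st] ts \<theta>(1)[of t] mult_left_mono[of "L s" "L t" "1 - \<theta> t"]
      by (simp_all add: algebra_simps)
    ultimately show ?thesis
      by linarith
  qed
  moreover have "x a = f a" if "a \<in> M" for a
    using LU(1)[OF that] by (simp add: x_def)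
  ultimately show ?thesis
    by blast
qed

section \<open>Cover chains\<close>

lemma covers_imp_less: "covers p q \<Longrightarrow> p < q"
  by (simp add: covers_def)

lemma covers_card_less:
  fixes q p :: "'a::{finite,order}"
  assumes "covers q p"
  shows "card {z. z < q} < card {z. z < p}"
  using covers_imp_less[OF assms] by (intro psubset_card_mono) (auto intro: less_trans)

lemma cover_chain_append:
  "cover_chain (xs @ y # ys) \<longleftrightarrow> cover_chain (xs @ [y]) \<and> cover_chain (y # ys)"
  by (induction xs rule: cover_chain.induct) auto

lemma cover_chain_snoc:
  "cover_chain (a # ps @ [b]) \<longleftrightarrow> cover_chain (a # ps) \<and> covers (last (a # ps)) b"
  by (induction ps arbitrary: a) auto

lemma cover_chain_join:
  "cover_chain (a # cs) \<Longrightarrow> cover_chain (last (a # cs) # ds) \<Longrightarrow> cover_chain (a # cs @ ds)"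
  by (induction cs arbitrary: a) (auto simp: cover_chain_append[of "[_]"])

lemma cover_chain_distinct: "cover_chain xs \<Longrightarrow> distinct xs"
proof -
  assume "cover_chain xs"
  then have "sorted_wrt (<) xs"
    by (induction xs rule: cover_chain.induct) (auto simp: covers_def intro: less_trans)
  then show "distinct xs"
    by (induction xs) auto
qed

lemma less_imp_covers_above:
  fixes a b :: "'a::{finite,order}"
  assumes "a < b"
  obtains c where "covers a c" "c \<le> b"
proof -
  obtain c where c: "c \<in> {z. a < z \<and> z \<le> b}" "\<forall>z\<in>{z. a < z \<and> z \<le> b}. z \<le> c \<longrightarrow> z = c"
    using finite_has_minimal[of "{z. a < z \<and> z \<le> b}"] assms by auto
  have "covers a c"
    unfolding covers_def using c by (auto intro: less_imp_le order.strict_trans1)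
  with c show thesis using that by blast
qed

lemma less_imp_covers_below:
  fixes a b :: "'a::{finite,order}"
  assumes "a < b"
  obtains c where "a \<le> c" "covers c b"
proof -
  obtain c where c: "c \<in> {z. a \<le> z \<and> z < b}" "\<forall>z\<in>{z. a \<le> z \<and> z < b}. c \<le> z \<longrightarrow> z = c"
    using finite_has_maximal[of "{z. a \<le> z \<and> z < b}"] assms by auto
  have "covers c b"
    unfolding covers_def
  proof (intro conjI notI)
    assume "\<exists>z. c < z \<and> z < b"
    then obtain z where "c < z" "z < b" by blast
    moreover from this have "a \<le> z" using c(1) by auto
    ultimately show False using c(2) by auto
  qed (use c in simp)
  with c show thesis using that by blast
qed

lemma exists_lower_cover:
  fixes p :: "'a::{finite,order}"
  assumes "p \<notin> minimal_elems"
  obtains q where "covers q p"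
  using assms less_imp_covers_below unfolding minimal_elems_def by blast

lemma exists_cover_chain:
  fixes s t :: "'a::{finite,order}"
  assumes "s \<le> t"
  shows "\<exists>cs. cover_chain (s # cs) \<and> last (s # cs) = t"
  using assms
proof (induction "card {z. s < z \<and> z \<le> t}" arbitrary: s rule: less_induct)
  case less
  show ?case
  proof (cases "s = t")
    case True
    then show ?thesis by (intro exI[of _ "[]"]) simp
  next
    case False
    then obtain c where c: "covers s c" "c \<le> t"
      using less.prems less_imp_covers_above by (metis order.order_iff_strict)
    have "{z. c < z \<and> z \<le> t} \<subset> {z. s < z \<and> z \<le> t}"
      using c covers_imp_less by fastforce
    then have "card {z. c < z \<and> z \<le> t} < card {z. s < z \<and> z \<le> t}"
      by (simp add: psubset_card_mono)
    then obtain cs where "cover_chain (c # cs)" "last (c # cs) = t"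
      using less.hyps c(2) by blast
    with c(1) show ?thesis by (intro exI[of _ "c # cs"]) auto
  qed
qed

lemma exists_minimal_below: "\<exists>m\<in>minimal_elems. m \<le> (s::'a::{finite,order})"
proof -
  obtain m where "m \<le> s" "\<forall>z. z \<le> s \<longrightarrow> z \<le> m \<longrightarrow> z = m"
    using finite_has_minimal[of "{z. z \<le> s}"] by auto
  then show ?thesis
    unfolding minimal_elems_def by (auto simp: less_le_not_le intro: order.trans)
qed

lemma exists_maximal_above: "\<exists>M\<in>maximal_elems. (s::'a::{finite,order}) \<le> M"
proof -
  obtain M where "s \<le> M" "\<forall>z. s \<le> z \<longrightarrow> M \<le> z \<longrightarrow> z = M"
    using finite_has_maximal[of "{z. s \<le> z}"] by auto
  then show ?thesis
    unfolding maximal_elems_def by (auto simp: less_le_not_le intro: order.trans)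
qed

lemma exists_maximal_cover_chain_through:
  fixes s :: "'a::{finite,order}"
  obtains m M cs ds where "m \<in> minimal_elems" "M \<in> maximal_elems"
    "cover_chain (m # cs)" "last (m # cs) = s" "cover_chain (s # ds)" "last (s # ds) = M"
proof -
  obtain m M where "m \<in> minimal_elems" "m \<le> s" "M \<in> maximal_elems" "s \<le> M"
    using exists_minimal_below exists_maximal_above by blast
  with exists_cover_chain[of m s] exists_cover_chain[of s M] that show thesis by blast
qed

lemma rank_function_cover_chain:
  assumes "rank_function r" "cover_chain (a # cs)"
  shows "r (last (a # cs)) = r a + int (length cs)"
  using assms(2)
proof (induction cs arbitrary: a)
  case (Cons c cs)
  then show ?case using assms(1) by (fastforce simp: rank_function_def)
qed simp

lemma regular_marked_less:
  fixes a b :: "'a::{finite,order}"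
  assumes "regular_marked Pstar lam" "a \<in> Pstar" "b \<in> Pstar" "a < b"
  shows "lam a < lam b"
proof -
  obtain c where c: "covers a c"
    using less_imp_covers_above assms(4) by blast
  have "a = b \<or> lam a < lam b"
    using assms(1-3) c covers_imp_less[OF c] assms(4) unfolding regular_marked_def
    by (blast dest: less_imp_le)
  then show ?thesis using assms(4) by auto
qed

lemma regular_marked_covers:
  fixes a b :: "'a::{finite,order}"
  assumes "regular_marked Pstar lam" "covers a b"
  shows "a \<notin> Pstar \<or> b \<notin> Pstar"
proof (rule ccontr)
  assume marked: "\<not> ?thesis"
  have "a = b \<or> lam b < lam a"
    using assms marked unfolding regular_marked_def by blast
  then have "lam b < lam a"
    using covers_imp_less[OF assms(2)] by auto
  moreover have "lam a < lam b"
    using regular_marked_less assms marked covers_imp_less by blast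
  ultimately show False by simp
qed

definition C_chains :: "'a::order set \<Rightarrow> ('a \<times> 'a list \<times> 'a) set" where
  "C_chains C = {(a, ps, b). a \<notin> C \<and> b \<notin> C \<and> set ps \<subseteq> C \<and> cover_chain (a # ps @ [b])}"

lemma finite_C_chains: "finite (C_chains (C :: 'a::{finite,order} set))"
proof -
  have "C_chains C \<subseteq> UNIV \<times> {ps. set ps \<subseteq> UNIV \<and> length ps \<le> CARD('a)} \<times> UNIV"
  proof
    fix t assume "t \<in> C_chains C"
    then obtain a ps b where t: "t = (a, ps, b)" "cover_chain (a # ps @ [b])"
      unfolding C_chains_def by auto
    then have "distinct ps"
      using cover_chain_distinct by fastforce
    then have "length ps \<le> CARD('a)"
      by (metis card_mono distinct_card finite subset_UNIV)
    then show "t \<in> UNIV \<times> {ps. set ps \<subseteq> UNIV \<and> length ps \<le> CARD('a)} \<times> UNIV"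
      using t by simp
  qed
  then show ?thesis
    by (rule finite_subset) (intro finite_cartesian_product finite_lists_length_le; simp)
qed

lemma C_chains_empty: "(a, ps, b) \<in> C_chains {} \<longleftrightarrow> ps = [] \<and> covers a b"
  by (auto simp: C_chains_def)

text \<open>Summing the inequalities of consecutive chains: every element outside \<open>C\<close> on a longer
  chain contributes \<open>g\<close>.\<close>
lemma cover_chain_sum_le:
  fixes f v :: "'a::order \<Rightarrow> 'b::ordered_ab_group_add"
  assumes chains: "\<And>a ps b. (a, ps, b) \<in> C_chains C \<Longrightarrow> sum_list (map f ps) + g \<le> v b - v a"
  shows "a \<notin> C \<Longrightarrow> cs \<noteq> [] \<Longrightarrow> last cs \<notin> C \<Longrightarrow> cover_chain (a # cs) \<Longrightarrow>
    sum_list (map (\<lambda>z. if z \<in> C then f z else g) cs) \<le> v (last cs) - v a"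
proof (induction "length cs" arbitrary: a cs rule: less_induct)
  case less
  let ?h = "\<lambda>z. if z \<in> C then f z else g"
  define ps where "ps = takeWhile (\<lambda>z. z \<in> C) cs"
  have "dropWhile (\<lambda>z. z \<in> C) cs \<noteq> []"
    using less.prems(2,3) by auto
  then obtain b rest where rest: "dropWhile (\<lambda>z. z \<in> C) cs = b # rest"
    by (meson neq_Nil_conv)
  then have b: "b \<notin> C"
    using hd_dropWhile[of "\<lambda>z. z \<in> C" cs] by simp
  have split: "cs = ps @ b # rest"
    using takeWhile_dropWhile_id[of "\<lambda>z. z \<in> C" cs] rest unfolding ps_def by simp
  have ps: "set ps \<subseteq> C"
    unfolding ps_def by (auto dest: set_takeWhileD)
  have "cover_chain ((a # ps) @ b # rest)"
    using less.prems(4) split by simp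
  then have "cover_chain (a # ps @ [b])" and rest_chain: "cover_chain (b # rest)"
    using cover_chain_append[of "a # ps" b rest] by simp_all
  then have first: "sum_list (map f ps) + g \<le> v b - v a"
    using chains less.prems(1) b ps unfolding C_chains_def by blast
  have "sum_list (map ?h ps) = sum_list (map f ps)"
    using ps by (intro arg_cong[where f = sum_list] map_cong) auto
  then have sum_split: "sum_list (map ?h cs) = (sum_list (map f ps) + g) + sum_list (map ?h rest)"
    using b by (simp add: split add.assoc)
  show ?case
  proof (cases "rest = []")
    case True
    then show ?thesis using split first sum_split by simp
  next
    case False
    then have "sum_list (map ?h rest) \<le> v (last cs) - v b"
      using less.hyps[of rest b] less.prems(3) split b rest_chain by simp
    then have "sum_list (map ?h cs) \<le> (v b - v a) + (v (last cs) - v b)"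
      unfolding sum_split by (rule add_mono[OF first])
    also have "\<dots> = v (last cs) - v a"
      by (simp add: algebra_simps)
    finally show ?thesis .
  qed
qed

lemma cover_chain_potential_mono:
  fixes f v :: "'a::order \<Rightarrow> 'b::ordered_ab_group_add"
  assumes chains: "\<And>a ps b. (a, ps, b) \<in> C_chains C \<Longrightarrow> sum_list (map f ps) \<le> v b - v a"
    and nonneg: "\<And>p. p \<in> C \<Longrightarrow> 0 \<le> f p"
    and "a \<notin> C" "last (a # zs) \<notin> C" "cover_chain (a # zs)"
  shows "v a \<le> v (last (a # zs))"
proof (cases "zs = []")
  case False
  let ?h = "\<lambda>z. if z \<in> C then f z else 0"
  have "0 \<le> sum_list (map ?h zs)"
    using nonneg by (induction zs) auto
  also have "\<dots> \<le> v (last zs) - v a"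
    using cover_chain_sum_le[of C f 0 v] chains assms(3-5) False by simp
  finally show ?thesis
    using False by simp
qed simp

lemma cover_chain_potential_bounds:
  fixes f v :: "'a::{finite,order} \<Rightarrow> 'b::ordered_ab_group_add"
  assumes chains: "\<And>a ps b. (a, ps, b) \<in> C_chains C \<Longrightarrow> sum_list (map f ps) \<le> v b - v a"
    and nonneg: "\<And>p. p \<in> C \<Longrightarrow> 0 \<le> f p"
    and extremal: "minimal_elems \<inter> C = {}" "maximal_elems \<inter> C = {}"
  obtains m M where "m \<in> minimal_elems" "M \<in> maximal_elems"
    "s \<notin> C \<Longrightarrow> v m \<le> v s \<and> v s \<le> v M" "s \<in> C \<Longrightarrow> f s \<le> v M - v m"
proof -
  obtain m M cs ds where mM: "m \<in> minimal_elems" "M \<in> maximal_elems"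
    and cs: "cover_chain (m # cs)" "last (m # cs) = s"
    and ds: "cover_chain (s # ds)" "last (s # ds) = M"
    by (rule exists_maximal_cover_chain_through)
  have outside: "m \<notin> C" "M \<notin> C"
    using mM extremal by blast+
  show thesis
  proof (rule that[OF mM])
    assume "s \<notin> C"
    then show "v m \<le> v s \<and> v s \<le> v M"
      using cover_chain_potential_mono[where f = f and v = v and C = C, OF chains nonneg] cs ds outside
      by (metis (no_types, lifting))
  next
    let ?h = "\<lambda>z. if z \<in> C then f z else 0"
    assume s: "s \<in> C"
    then have "cs \<noteq> []" "ds \<noteq> []"
      using cs ds outside by auto
    moreover have "cover_chain (m # cs @ ds)"
      using cover_chain_join[OF cs(1)] cs(2) ds(1) by simp
    ultimately have "sum_list (map ?h (cs @ ds)) \<le> v M - v m"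
      using cover_chain_sum_le[of C f 0 v m "cs @ ds"] chains ds(2) outside by simp
    moreover have "?h s \<in> set (map ?h (cs @ ds))"
      using \<open>cs \<noteq> []\<close> cs(2) unfolding set_map by (intro imageI) (metis UnI1 last_ConsR last_in_set set_append)
    then have "?h s \<le> sum_list (map ?h (cs @ ds))"
      by (rule member_le_sum_list) (use nonneg in auto)
    ultimately show "f s \<le> v M - v m"
      using s by simp
  qed
qed

section \<open>Unmarked coordinates and polar duals\<close>

lemma subspace_unmarked_space: "subspace (unmarked_space Pstar)"
  by (auto simp: subspace_def unmarked_space_def)

lemma zero_in_unmarked_space: "0 \<in> unmarked_space Pstar"
  by (simp add: unmarked_space_def)

lemma axis_in_unmarked_space: "p \<notin> Pstar \<Longrightarrow> axis p 1 \<in> unmarked_space Pstar"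
  by (auto simp: unmarked_space_def axis_def)

lemma proj_unmarked_in_unmarked_space: "proj_unmarked Pstar x \<in> unmarked_space Pstar"
  by (simp add: proj_unmarked_def unmarked_space_def)

lemma inner_proj_unmarked: "y \<in> unmarked_space Pstar \<Longrightarrow> proj_unmarked Pstar c \<bullet> y = c \<bullet> y"
  unfolding inner_vec_def proj_unmarked_def unmarked_space_def by (intro sum.cong) auto

definition lift_marked :: "'a::finite set \<Rightarrow> ('a \<Rightarrow> int) \<Rightarrow> (real, 'a) vec \<Rightarrow> (real, 'a) vec" where
  "lift_marked Pstar lam y = (\<chi> i. if i \<in> Pstar then of_int (lam i) else y $ i)"

lemma proj_lift_marked: "y \<in> unmarked_space Pstar \<Longrightarrow> proj_unmarked Pstar (lift_marked Pstar lam y) = y"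
  by (auto simp: proj_unmarked_def lift_marked_def unmarked_space_def vec_eq_iff)

lemma lift_proj_unmarked:
  "\<forall>a\<in>Pstar. x $ a = of_int (lam a) \<Longrightarrow> lift_marked Pstar lam (proj_unmarked Pstar x) = x"
  by (auto simp: proj_unmarked_def lift_marked_def vec_eq_iff)

lemma lift_marked_add: "w \<in> unmarked_space Pstar \<Longrightarrow> lift_marked Pstar lam (y + w) = lift_marked Pstar lam y + w"
  by (auto simp: lift_marked_def unmarked_space_def vec_eq_iff)

lemma lift_marked_eq_add: "y \<in> unmarked_space Pstar \<Longrightarrow> lift_marked Pstar lam y = lift_marked Pstar lam 0 + y"
  using lift_marked_add[of y Pstar lam 0] by simp

lemma integral_vec_lift_marked: "integral_vec y \<Longrightarrow> integral_vec (lift_marked Pstar lam y)"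
  by (simp add: integral_vec_def lift_marked_def)

lemma inner_integral_vec_in_Ints: "integral_vec c \<Longrightarrow> integral_vec x \<Longrightarrow> c \<bullet> x \<in> \<int>"
  unfolding inner_vec_def integral_vec_def by (intro Ints_sum Ints_mult) auto

lemma lattice_polytope_translate:
  assumes "lattice_polytope S" "integral_vec u"
  shows "lattice_polytope ((\<lambda>x. x - u) ` S)"
proof -
  obtain V where V: "finite V" "\<forall>v\<in>V. integral_vec v" "S = convex hull V"
    using assms(1) unfolding lattice_polytope_def by blast
  have "(\<lambda>x. x - u) ` S = convex hull ((\<lambda>x. - u + x) ` V)"
    using convex_hull_translation[of "- u" V] V(3) by simp
  moreover have "\<forall>v\<in>(\<lambda>x. - u + x) ` V. integral_vec v"
    using V(2) assms(2) by (auto simp: integral_vec_def)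
  ultimately show ?thesis
    unfolding lattice_polytope_def using V(1) by blast
qed

lemma convex_polar_dual: "convex (polar_dual Pstar S)"
  unfolding polar_dual_def
  by (rule convexI) (auto intro: subspace_add subspace_scale subspace_unmarked_space
      simp: inner_add_left convex_bound_le)

lemma polar_dual_halfspaces_subset:
  fixes A :: "(real, 'a::finite) vec set"
  assumes "finite A" "A \<subseteq> unmarked_space Pstar"
  shows "polar_dual Pstar {y \<in> unmarked_space Pstar. \<forall>c\<in>A. c \<bullet> y \<le> 1} \<subseteq> convex hull (insert 0 A)"
    (is "polar_dual Pstar ?P \<subseteq> _")
proof
  fix \<beta> assume \<beta>: "\<beta> \<in> polar_dual Pstar ?P"
  show "\<beta> \<in> convex hull (insert 0 A)"
  proof (rule ccontr)
    assume "\<beta> \<notin> convex hull (insert 0 A)"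
    moreover have "closed (convex hull (insert 0 A))"
      using assms(1) by (simp add: compact_imp_closed finite_imp_compact_convex_hull)
    ultimately obtain c b where cb: "c \<bullet> \<beta> < b" "\<forall>x\<in>convex hull (insert 0 A). b < c \<bullet> x"
      using separating_hyperplane_closed_point[OF convex_convex_hull] by blast
    have "0 \<in> convex hull (insert 0 A)"
      by (rule hull_inc) simp
    then have "b < 0"
      using cb(2) by fastforce
    define y where "y = (1 / - b) *\<^sub>R proj_unmarked Pstar (- c)"
    have inner_y: "\<gamma> \<bullet> y = (c \<bullet> \<gamma>) / b" if "\<gamma> \<in> unmarked_space Pstar" for \<gamma>
      using inner_proj_unmarked[OF that, of "- c"] unfolding y_def
      by (simp add: inner_commute divide_minus_right)
    have "y \<in> ?P"
    proof (intro CollectI conjI ballI)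
      show "y \<in> unmarked_space Pstar"
        unfolding y_def by (intro subspace_scale subspace_unmarked_space proj_unmarked_in_unmarked_space)
      fix \<alpha> assume \<alpha>: "\<alpha> \<in> A"
      then have "b < c \<bullet> \<alpha>"
        using cb(2) hull_inc[of \<alpha> "insert 0 A"] by auto
      then show "\<alpha> \<bullet> y \<le> 1"
        using inner_y[of \<alpha>] \<alpha> assms(2) \<open>b < 0\<close> by (auto simp: divide_le_eq)
    qed
    then have "\<beta> \<bullet> y \<le> 1" and "\<beta> \<in> unmarked_space Pstar"
      using \<beta> unfolding polar_dual_def by auto
    then show False
      using inner_y cb(1) \<open>b < 0\<close> by (simp add: divide_le_eq)
  qed
qed

lemma polar_dual_halfspaces:
  fixes A :: "(real, 'a::finite) vec set"
  assumes "finite A" "A \<subseteq> unmarked_space Pstar"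
  shows "polar_dual Pstar {y \<in> unmarked_space Pstar. \<forall>c\<in>A. c \<bullet> y \<le> 1} = convex hull (insert 0 A)"
proof
  have "insert 0 A \<subseteq> polar_dual Pstar {y \<in> unmarked_space Pstar. \<forall>c\<in>A. c \<bullet> y \<le> 1}"
    using assms(2) zero_in_unmarked_space unfolding polar_dual_def by auto
  then show "convex hull (insert 0 A) \<subseteq> polar_dual Pstar {y \<in> unmarked_space Pstar. \<forall>c\<in>A. c \<bullet> y \<le> 1}"
    by (intro hull_minimal convex_polar_dual)
qed (rule polar_dual_halfspaces_subset[OF assms])

text \<open>Here \<open>z\<close> lies in the relative interior of the facet \<open>l \<bullet> y = D\<close> of \<open>S\<close>, so the scaled facet
  normal is the only point of the polar dual attaining \<open>1\<close> at \<open>z\<close>.\<close>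
lemma extreme_point_polar_dual_facet_normal:
  fixes S :: "(real, 'a::finite) vec set"
  assumes "l \<in> unmarked_space Pstar" "D > 0" "\<forall>y\<in>S. l \<bullet> y \<le> D" "z \<in> S" "l \<bullet> z = D"
    and perturb: "\<And>w. w \<in> unmarked_space Pstar \<Longrightarrow> l \<bullet> w = 0 \<Longrightarrow> \<exists>\<tau>>0. z + \<tau> *\<^sub>R w \<in> S"
  shows "(1 / D) *\<^sub>R l extreme_point_of polar_dual Pstar S"
proof (rule extreme_point_if_unique_maximizer[OF convex_polar_dual])
  show "\<forall>y\<in>polar_dual Pstar S. y \<bullet> z \<le> 1"
    using assms(4) unfolding polar_dual_def by blast
  show "(1 / D) *\<^sub>R l \<in> polar_dual Pstar S"
    using assms(1-3) subspace_scale[OF subspace_unmarked_space] unfolding polar_dual_def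
    by (auto simp: divide_le_eq)
  show "(1 / D) *\<^sub>R l \<bullet> z = 1"
    using assms(2,5) by simp
  fix \<beta> assume \<beta>: "\<beta> \<in> polar_dual Pstar S" "\<beta> \<bullet> z = 1"
  have "\<beta> \<bullet> w \<le> 0" if w: "w \<in> unmarked_space Pstar" "l \<bullet> w = 0" for w
  proof -
    obtain \<tau> where "\<tau> > 0" "z + \<tau> *\<^sub>R w \<in> S"
      using perturb[OF w] by blast
    then have "\<beta> \<bullet> (z + \<tau> *\<^sub>R w) \<le> 1"
      using \<beta>(1) unfolding polar_dual_def by blast
    then show ?thesis
      using \<beta>(2) \<open>\<tau> > 0\<close> by (simp add: inner_add_right mult_le_0_iff)
  qed
  then have "\<beta> = ((\<beta> \<bullet> l) / (l \<bullet> l)) *\<^sub>R l"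
    using \<beta>(1) assms(1) subspace_unmarked_space unfolding polar_dual_def
    by (intro multiple_if_nonpos_on_orthogonal) auto
  then obtain k where k: "\<beta> = k *\<^sub>R l" ..
  then have "k * D = 1"
    using \<beta>(2) assms(5) by simp
  then have "k = 1 / D"
    using assms(2) by (simp add: eq_divide_eq)
  then show "\<beta> = (1 / D) *\<^sub>R l"
    using k by simp
qed

section \<open>The polytope as an intersection of half-spaces\<close>

definition chain_normal :: "'a::finite \<Rightarrow> 'a list \<Rightarrow> 'a \<Rightarrow> (real, 'a) vec" where
  "chain_normal a ps b =
     (\<chi> i. real (count_list ps i) + (if i = a then 1 else 0) - (if i = b then 1 else 0))"

lemma inner_chain_normal: "chain_normal a ps b \<bullet> x = sum_list (map (\<lambda>p. x $ p) ps) + x $ a - x $ b"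
proof -
  have "(\<Sum>i\<in>UNIV. real (count_list ps i) * x $ i) = sum_list (map (\<lambda>p. x $ p) ps)"
  proof (induction ps)
    case (Cons p ps)
    have "(\<Sum>i\<in>UNIV. real (count_list (p # ps) i) * x $ i)
        = (\<Sum>i\<in>UNIV. (if i = p then x $ i else 0) + real (count_list ps i) * x $ i)"
      by (intro sum.cong) (auto simp: algebra_simps)
    then show ?case
      using Cons by (simp add: sum.distrib)
  qed simp
  moreover have "chain_normal a ps b \<bullet> x = (\<Sum>i\<in>UNIV. real (count_list ps i) * x $ i
      + (if i = a then x $ i else 0) - (if i = b then x $ i else 0))"
    unfolding inner_vec_def chain_normal_def by (intro sum.cong) (auto simp: algebra_simps)
  ultimately show ?thesis
    by (simp add: sum.distrib sum_subtractf)
qed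

text \<open>Conditions (2) and (3) of the polytope, written as \<open>c \<bullet> x \<le> 0\<close>.\<close>
definition chain_order_normals :: "'a::{finite,order} set \<Rightarrow> (real, 'a) vec set" where
  "chain_order_normals C =
     (\<lambda>p. - axis p 1) ` C \<union> (\<lambda>(a, ps, b). chain_normal a ps b) ` C_chains C"

lemma finite_chain_order_normals: "finite (chain_order_normals C)"
  by (simp add: chain_order_normals_def finite_C_chains)

lemma integral_chain_order_normals: "c \<in> chain_order_normals C \<Longrightarrow> integral_vec c"
  by (auto simp: chain_order_normals_def integral_vec_def axis_def chain_normal_def)

lemma mem_chain_order_normals:
  "c \<in> chain_order_normals C \<longleftrightarrow>
    (\<exists>p\<in>C. c = - axis p 1) \<or> (\<exists>a ps b. (a, ps, b) \<in> C_chains C \<and> c = chain_normal a ps b)"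
  by (force simp: chain_order_normals_def)

lemma neg_axis_in_chain_order_normals: "p \<in> C \<Longrightarrow> - axis p 1 \<in> chain_order_normals C"
  by (simp add: chain_order_normals_def)

lemma chain_normal_in_chain_order_normals:
  "(a, ps, b) \<in> C_chains C \<Longrightarrow> chain_normal a ps b \<in> chain_order_normals C"
  by (force simp: chain_order_normals_def)

lemma chain_order_normals_empty: "c \<in> chain_order_normals {} \<longleftrightarrow> (\<exists>a b. covers a b \<and> c = chain_normal a [] b)"
  by (auto simp: mem_chain_order_normals C_chains_empty)

lemma chain_order_normals_nonpos_iff:
  "(\<forall>c\<in>chain_order_normals C. c \<bullet> x \<le> 0) \<longleftrightarrow> (\<forall>p\<in>C. 0 \<le> x $ p) \<and>
    (\<forall>a b ps. a \<notin> C \<longrightarrow> b \<notin> C \<longrightarrow> set ps \<subseteq> C \<longrightarrow> cover_chain (a # ps @ [b]) \<longrightarrow>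
       sum_list (map (\<lambda>p. x $ p) ps) \<le> x $ b - x $ a)" (is "?N \<longleftrightarrow> ?C \<and> ?H")
proof
  assume N: ?N
  have "0 \<le> x $ p" if "p \<in> C" for p
    using N neg_axis_in_chain_order_normals[OF that] by (fastforce simp: inner_axis')
  moreover have "sum_list (map (\<lambda>p. x $ p) ps) \<le> x $ b - x $ a" if "(a, ps, b) \<in> C_chains C" for a ps b
    using N chain_normal_in_chain_order_normals[OF that] by (fastforce simp: inner_chain_normal)
  ultimately show "?C \<and> ?H"
    unfolding C_chains_def by blast
next
  assume CH: "?C \<and> ?H"
  show ?N
  proof
    fix c assume "c \<in> chain_order_normals C"
    then consider p where "p \<in> C" "c = - axis p 1"
      | a ps b where "(a, ps, b) \<in> C_chains C" "c = chain_normal a ps b"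
      unfolding mem_chain_order_normals by blast
    then show "c \<bullet> x \<le> 0"
    proof cases
      case 1
      then show ?thesis using CH by (simp add: inner_axis')
    next
      case 2
      then have "sum_list (map (\<lambda>p. x $ p) ps) \<le> x $ b - x $ a"
        using CH unfolding C_chains_def by blast
      then show ?thesis using 2 by (simp add: inner_chain_normal)
    qed
  qed
qed

lemma mem_marked_chain_order_polytope_full:
  assumes "Pstar \<union> Op = - C"
  shows "x \<in> marked_chain_order_polytope_full Pstar lam C Op \<longleftrightarrow>
    (\<forall>a\<in>Pstar. x $ a = of_int (lam a)) \<and> (\<forall>c\<in>chain_order_normals C. c \<bullet> x \<le> 0)"
proof -
  have "a \<in> Pstar \<union> Op \<longleftrightarrow> a \<notin> C" for a
    using assms by auto
  then show ?thesis
    unfolding marked_chain_order_polytope_full_def mem_Collect_eq chain_order_normals_nonpos_iff by simp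
qed

lemma marked_chain_order_polytope_eq:
  "marked_chain_order_polytope Pstar lam C Op = {y \<in> unmarked_space Pstar.
     lift_marked Pstar lam y \<in> marked_chain_order_polytope_full Pstar lam C Op}"
proof (intro set_eqI iffI)
  fix y assume "y \<in> marked_chain_order_polytope Pstar lam C Op"
  then obtain x where x: "x \<in> marked_chain_order_polytope_full Pstar lam C Op" "y = proj_unmarked Pstar x"
    unfolding marked_chain_order_polytope_def by blast
  then have "lift_marked Pstar lam y = x"
    by (simp add: lift_proj_unmarked marked_chain_order_polytope_full_def)
  then show "y \<in> {y \<in> unmarked_space Pstar.
      lift_marked Pstar lam y \<in> marked_chain_order_polytope_full Pstar lam C Op}"
    using x by (simp add: proj_unmarked_in_unmarked_space)
next
  fix y assume "y \<in> {y \<in> unmarked_space Pstar.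
      lift_marked Pstar lam y \<in> marked_chain_order_polytope_full Pstar lam C Op}"
  then show "y \<in> marked_chain_order_polytope Pstar lam C Op"
    unfolding marked_chain_order_polytope_def by (metis (lifting) mem_Collect_eq proj_lift_marked image_eqI)
qed

lemma translate_marked_chain_order_polytope:
  assumes "Pstar \<union> Op = - C" "v \<in> unmarked_space Pstar"
  shows "(\<lambda>x. x - v) ` marked_chain_order_polytope Pstar lam C Op = {y \<in> unmarked_space Pstar.
     \<forall>c\<in>chain_order_normals C. c \<bullet> (lift_marked Pstar lam v + y) \<le> 0}"
proof -
  have "y \<in> (\<lambda>x. x - v) ` S \<longleftrightarrow> y + v \<in> S" for y and S :: "(real, 'a) vec set"
    by (auto intro: rev_image_eqI[of "y + v"])
  moreover have "y + v \<in> unmarked_space Pstar \<longleftrightarrow> y \<in> unmarked_space Pstar" for y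
    using assms(2) subspace_unmarked_space
    by (metis add_diff_cancel subspace_add subspace_diff)
  moreover have "lift_marked Pstar lam (y + v) = lift_marked Pstar lam v + y" if "y \<in> unmarked_space Pstar" for y
    using lift_marked_add[OF that, of lam v] by (simp add: add.commute)
  moreover have "\<forall>a\<in>Pstar. (lift_marked Pstar lam v + y) $ a = of_int (lam a)" if "y \<in> unmarked_space Pstar" for y
    using that by (simp add: lift_marked_def unmarked_space_def)
  ultimately show ?thesis
    unfolding marked_chain_order_polytope_eq mem_marked_chain_order_polytope_full[OF assms(1)]
    by (auto simp: set_eq_iff)
qed

lemma marked_chain_order_polytope_halfspaces:
  assumes "Pstar \<union> Op = - C"
  shows "marked_chain_order_polytope Pstar lam C Op = {y \<in> unmarked_space Pstar.
     \<forall>c\<in>chain_order_normals C. c \<bullet> (lift_marked Pstar lam 0 + y) \<le> 0}"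
  using translate_marked_chain_order_polytope[OF assms zero_in_unmarked_space] by simp

lemma chain_normal_positive_direction:
  fixes C :: "'a::{finite,order} set"
  assumes "regular_marked Pstar lam" "Pstar \<inter> C = {}" "(a, ps, b) \<in> C_chains C"
  shows "\<exists>w\<in>unmarked_space Pstar. 0 < chain_normal a ps b \<bullet> w"
proof -
  have chain: "cover_chain (a # ps @ [b])" "set ps \<subseteq> C" and distinct: "distinct (a # ps @ [b])"
    using assms(3) cover_chain_distinct unfolding C_chains_def by blast+
  show ?thesis
  proof (cases ps)
    case (Cons p ps')
    have "0 \<le> sum_list (map (\<lambda>q. axis p (1::real) $ q) ps')"
      by (induction ps') (auto simp: axis_def)
    moreover have "chain_normal a ps b \<bullet> axis p 1 = 1 + sum_list (map (\<lambda>q. axis p 1 $ q) ps')"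
      using distinct Cons by (auto simp: inner_chain_normal axis_def)
    moreover have "axis p 1 \<in> unmarked_space Pstar"
      using chain(2) assms(2) Cons by (intro axis_in_unmarked_space) auto
    ultimately show ?thesis
      by (intro bexI[of _ "axis p 1"]) simp_all
  next
    case Nil
    then have "covers a b" "a \<noteq> b"
      using chain distinct by simp_all
    then consider "a \<notin> Pstar" | "b \<notin> Pstar"
      using regular_marked_covers[OF assms(1)] by blast
    then show ?thesis
    proof cases
      case 1
      have "chain_normal a ps b \<bullet> axis a 1 = 1"
        using Nil \<open>a \<noteq> b\<close> by (simp add: inner_chain_normal axis_def)
      then show ?thesis
        using axis_in_unmarked_space[OF 1] by (intro bexI[of _ "axis a 1"]) simp_all
    next
      case 2
      have "chain_normal a ps b \<bullet> (- axis b 1) = 1"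
        using Nil \<open>a \<noteq> b\<close> by (simp add: inner_chain_normal axis_def)
      then show ?thesis
        using subspace_neg[OF subspace_unmarked_space axis_in_unmarked_space[OF 2]]
        by (intro bexI[of _ "- axis b 1"]) simp_all
    qed
  qed
qed

lemma chain_order_normal_positive_direction:
  fixes C :: "'a::{finite,order} set"
  assumes "regular_marked Pstar lam" "Pstar \<union> Op = - C" "c \<in> chain_order_normals C"
  shows "\<exists>w\<in>unmarked_space Pstar. 0 < c \<bullet> w"
proof -
  have disjoint: "Pstar \<inter> C = {}"
    using assms(2) by blast
  consider p where "p \<in> C" "c = - axis p 1"
    | a ps b where "(a, ps, b) \<in> C_chains C" "c = chain_normal a ps b"
    using assms(3) unfolding mem_chain_order_normals by blast
  then show ?thesis
  proof cases
    case 1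
    then have "c \<bullet> (- axis p 1) = 1" "p \<notin> Pstar"
      using disjoint by (auto simp: inner_axis_axis)
    then show ?thesis
      using subspace_neg[OF subspace_unmarked_space axis_in_unmarked_space]
      by (intro bexI[of _ "- axis p 1"]) simp_all
  next
    case 2
    then show ?thesis
      using chain_normal_positive_direction[OF assms(1) disjoint] by blast
  qed
qed

lemma interior_translate_marked_chain_order_polytope:
  assumes "regular_marked Pstar lam" "Pstar \<union> Op = - C" "v \<in> unmarked_space Pstar"
  shows "interior_in Pstar ((\<lambda>x. x - v) ` marked_chain_order_polytope Pstar lam C Op) =
    {y \<in> unmarked_space Pstar. \<forall>c\<in>chain_order_normals C. c \<bullet> (lift_marked Pstar lam v + y) < 0}"
  unfolding interior_in_def translate_marked_chain_order_polytope[OF assms(2,3)]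
  using chain_order_normal_positive_direction[OF assms(1,2)]
  by (intro interior_of_halfspaces_in_subspace subspace_unmarked_space finite_chain_order_normals)

lemma mem_interior_marked_chain_order_polytope:
  assumes "regular_marked Pstar lam" "Pstar \<union> Op = - C"
  shows "y \<in> interior_in Pstar (marked_chain_order_polytope Pstar lam C Op) \<longleftrightarrow>
    y \<in> unmarked_space Pstar \<and> (\<forall>c\<in>chain_order_normals C. c \<bullet> lift_marked Pstar lam y < 0)"
  using interior_translate_marked_chain_order_polytope[OF assms zero_in_unmarked_space]
  by (auto simp: lift_marked_eq_add[of _ Pstar lam])

section \<open>Integrality of the vertices\<close>

text \<open>Stanley's transfer map from chain coordinates to order coordinates: the largest sum of \<open>x\<close>
  along a saturated chain that ends in \<open>p\<close> and lies in \<open>C\<close> after its first element.\<close>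
function chain_transfer :: "'a::{finite,order} set \<Rightarrow> (real, 'a) vec \<Rightarrow> 'a \<Rightarrow> real" where
  "chain_transfer C x p =
     (if p \<in> C \<and> (\<exists>q. covers q p) then x $ p + Max (chain_transfer C x ` {q. covers q p}) else x $ p)"
  by auto
termination
  by (relation "Wellfounded.measure (\<lambda>(C, x, p). card {z. z < p})") (auto intro: covers_card_less)

declare chain_transfer.simps [simp del]

lemma chain_transfer_not_in: "p \<notin> C \<Longrightarrow> chain_transfer C x p = x $ p"
  by (simp add: chain_transfer.simps)

lemma chain_transfer_covers_le:
  assumes "p \<in> C" "covers q p"
  shows "chain_transfer C x q + x $ p \<le> chain_transfer C x p"
proof -
  have "chain_transfer C x q \<le> Max (chain_transfer C x ` {q. covers q p})"
    using assms by (intro Max_ge) auto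
  then show ?thesis
    using assms by (subst (2) chain_transfer.simps) auto
qed

lemma chain_transfer_attained:
  assumes "p \<in> C" "\<exists>q. covers q p"
  obtains q where "covers q p" "chain_transfer C x p = x $ p + chain_transfer C x q"
proof -
  have "Max (chain_transfer C x ` {q. covers q p}) \<in> chain_transfer C x ` {q. covers q p}"
    using assms by (intro Max_in) auto
  then obtain q where "covers q p" "Max (chain_transfer C x ` {q. covers q p}) = chain_transfer C x q"
    by auto
  moreover have "chain_transfer C x p = x $ p + Max (chain_transfer C x ` {q. covers q p})"
    using assms by (subst chain_transfer.simps) auto
  ultimately show thesis
    using that by simp
qed

lemma chain_transfer_eq_chain_sum:
  fixes C :: "'a::{finite,order} set"
  assumes "\<forall>p\<in>C. \<exists>q. covers q p"
  shows "\<exists>a ps. a \<notin> C \<and> set ps \<subseteq> C \<and> cover_chain (a # ps) \<and> last (a # ps) = p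
     \<and> chain_transfer C x p = x $ a + sum_list (map (\<lambda>z. x $ z) ps)"
proof (induction "card {z. z < p}" arbitrary: p rule: less_induct)
  case less
  show ?case
  proof (cases "p \<in> C")
    case False
    then show ?thesis by (intro exI[of _ p] exI[of _ "[]"]) (simp add: chain_transfer_not_in)
  next
    case True
    then obtain q where q: "covers q p" "chain_transfer C x p = x $ p + chain_transfer C x q"
      using chain_transfer_attained[OF True] assms by blast
    obtain a ps where a: "a \<notin> C" "set ps \<subseteq> C" "cover_chain (a # ps)" "last (a # ps) = q"
      "chain_transfer C x q = x $ a + sum_list (map (\<lambda>z. x $ z) ps)"
      using less.hyps[OF covers_card_less[OF q(1)]] by blast
    have "cover_chain (a # ps @ [p])"
      using a(3,4) q(1) by (simp add: cover_chain_snoc)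
    then show ?thesis
      using a True q by (intro exI[of _ a] exI[of _ "ps @ [p]"]) auto
  qed
qed

lemma chain_transfer_le_cover:
  fixes C :: "'a::{finite,order} set"
  assumes "\<forall>p\<in>C. \<exists>q. covers q p" "\<forall>c\<in>chain_order_normals C. c \<bullet> x \<le> 0"
    and "covers l b" "b \<notin> C"
  shows "chain_transfer C x l \<le> x $ b"
proof -
  obtain a ps where a: "a \<notin> C" "set ps \<subseteq> C" "cover_chain (a # ps)" "last (a # ps) = l"
      "chain_transfer C x l = x $ a + sum_list (map (\<lambda>z. x $ z) ps)"
    using chain_transfer_eq_chain_sum[OF assms(1)] by blast
  then have "(a, ps, b) \<in> C_chains C"
    using assms(3,4) by (simp add: C_chains_def cover_chain_snoc)
  then have "chain_normal a ps b \<bullet> x \<le> 0"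
    using assms(2) chain_normal_in_chain_order_normals by blast
  then show ?thesis
    using a(5) by (simp add: inner_chain_normal)
qed

lemma chain_transfer_cover_chain_le:
  assumes "cover_chain (c # ps)" "set ps \<subseteq> C"
  shows "chain_transfer C x c + sum_list (map (\<lambda>z. x $ z) ps) \<le> chain_transfer C x (last (c # ps))"
  using assms
proof (induction ps rule: rev_induct)
  case (snoc p ps)
  then have "cover_chain (c # ps)" "covers (last (c # ps)) p" "p \<in> C" "set ps \<subseteq> C"
    by (simp_all add: cover_chain_snoc)
  then show ?case
    using snoc.IH chain_transfer_covers_le[of p C "last (c # ps)" x] by simp
qed simp

lemma chain_transfer_telescope:
  fixes g :: "real \<Rightarrow> real"
  assumes "cover_chain (c # ps)" "set ps \<subseteq> C"
    and "chain_transfer C x (last (c # ps)) = chain_transfer C x c + sum_list (map (\<lambda>z. x $ z) ps)"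
  shows "sum_list (map (\<lambda>s. g (chain_transfer C x s) - g (chain_transfer C x s - x $ s)) ps)
    = g (chain_transfer C x (last (c # ps))) - g (chain_transfer C x c)"
  using assms
proof (induction ps rule: rev_induct)
  case (snoc p ps)
  let ?T = "chain_transfer C x" and ?l = "last (c # ps)"
  let ?f = "\<lambda>s. g (?T s) - g (?T s - x $ s)"
  have chain: "cover_chain (c # ps)" "covers ?l p" "p \<in> C" "set ps \<subseteq> C"
    using snoc.prems(1,2) by (simp_all add: cover_chain_snoc)
  have "?T c + sum_list (map (\<lambda>z. x $ z) ps) \<le> ?T ?l"
    using chain_transfer_cover_chain_le[OF chain(1,4)] .
  moreover have "?T ?l + x $ p \<le> ?T p"
    using chain_transfer_covers_le[OF chain(3,2)] .
  ultimately have "?T ?l = ?T c + sum_list (map (\<lambda>z. x $ z) ps)" "?T p - x $ p = ?T ?l"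
    using snoc.prems(3) by simp_all
  then have "sum_list (map ?f ps) = g (?T ?l) - g (?T c)" "?f p = g (?T p) - g (?T ?l)"
    using snoc.IH[OF chain(1,4)] by simp_all
  then show ?case
    by simp
qed simp

text \<open>Shifting all order coordinates \<open>chain_transfer C x s\<close> of fractional part \<open>t\<close> by the same
  amount moves the chain coordinates in this direction.\<close>
definition transfer_direction :: "'a::{finite,order} set \<Rightarrow> (real, 'a) vec \<Rightarrow> real \<Rightarrow> (real, 'a) vec" where
  "transfer_direction C x t = (\<chi> s. of_bool (frac (chain_transfer C x s) = t)
     - (if s \<in> C then of_bool (frac (chain_transfer C x s - x $ s) = t) else 0))"

lemma transfer_direction_in_unmarked_space:
  assumes "Pstar \<inter> C = {}" "\<forall>a\<in>Pstar. x $ a \<in> \<int>" "t \<noteq> 0"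
  shows "transfer_direction C x t \<in> unmarked_space Pstar"
  unfolding unmarked_space_def
proof (intro CollectI ballI)
  fix a assume a: "a \<in> Pstar"
  then have "a \<notin> C"
    using assms(1) by blast
  moreover have "frac (chain_transfer C x a) = 0"
    using \<open>a \<notin> C\<close> a assms(2) by (simp add: chain_transfer_not_in frac_eq_0_iff)
  ultimately show "transfer_direction C x t $ a = 0"
    using assms(3) by (simp add: transfer_direction_def del: frac_eq_0_iff)
qed

lemma transfer_direction_nonzero:
  fixes C :: "'a::{finite,order} set"
  assumes "\<forall>p\<in>C. \<exists>q. covers q p" "t = frac (chain_transfer C x s0)"
  shows "transfer_direction C x t \<noteq> 0"
proof -
  let ?S = "{s. frac (chain_transfer C x s) = t}"
  have "?S \<noteq> {}"
    using assms(2) by blast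
  then have "\<exists>m\<in>?S. \<forall>s\<in>?S. s \<le> m \<longrightarrow> m = s"
    by (intro finite_has_minimal) simp_all
  then obtain m where m: "m \<in> ?S" "\<forall>s\<in>?S. s \<le> m \<longrightarrow> m = s" ..
  have "frac (chain_transfer C x m - x $ m) \<noteq> t" if mC: "m \<in> C"
  proof
    obtain q where q: "covers q m" "chain_transfer C x m = x $ m + chain_transfer C x q"
      using chain_transfer_attained[OF mC] assms(1) mC by blast
    assume "frac (chain_transfer C x m - x $ m) = t"
    then have "q \<in> ?S"
      using q(2) by simp
    then have "m = q"
      using m(2) covers_imp_less[OF q(1)] by auto
    then show False
      using covers_imp_less[OF q(1)] by simp
  qed
  then have "transfer_direction C x t $ m = 1"
    using m(1) by (simp add: transfer_direction_def)
  then show ?thesis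
    by auto
qed

lemma chain_transfer_tight_chain:
  fixes C :: "'a::{finite,order} set"
  assumes "\<forall>p\<in>C. \<exists>q. covers q p" "\<forall>c\<in>chain_order_normals C. c \<bullet> x \<le> 0"
    and "(a, ps, b) \<in> C_chains C" "chain_normal a ps b \<bullet> x = 0"
  shows "chain_transfer C x (last (a # ps)) = chain_transfer C x a + sum_list (map (\<lambda>z. x $ z) ps)"
    and "chain_transfer C x (last (a # ps)) = chain_transfer C x b"
proof -
  have ab: "a \<notin> C" "b \<notin> C" and ps: "set ps \<subseteq> C"
    and chain: "cover_chain (a # ps)" "covers (last (a # ps)) b"
    using assms(3) by (simp_all add: C_chains_def cover_chain_snoc)
  have "chain_transfer C x a + sum_list (map (\<lambda>z. x $ z) ps) \<le> chain_transfer C x (last (a # ps))"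
    by (rule chain_transfer_cover_chain_le[OF chain(1) ps])
  moreover have "chain_transfer C x (last (a # ps)) \<le> x $ b"
    by (rule chain_transfer_le_cover[OF assms(1,2) chain(2) ab(2)])
  moreover have "sum_list (map (\<lambda>z. x $ z) ps) + x $ a = x $ b"
    using assms(4) by (simp add: inner_chain_normal)
  ultimately show "chain_transfer C x (last (a # ps)) = chain_transfer C x a + sum_list (map (\<lambda>z. x $ z) ps)"
    and "chain_transfer C x (last (a # ps)) = chain_transfer C x b"
    using ab by (simp_all add: chain_transfer_not_in)
qed

lemma transfer_direction_tight:
  fixes C :: "'a::{finite,order} set"
  assumes "\<forall>p\<in>C. \<exists>q. covers q p" "\<forall>c\<in>chain_order_normals C. c \<bullet> x \<le> 0"
    and "c \<in> chain_order_normals C" "c \<bullet> x = 0"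
  shows "c \<bullet> transfer_direction C x t = 0"
proof -
  let ?T = "chain_transfer C x" and ?g = "\<lambda>v. of_bool (frac v = t) :: real"
  let ?w = "transfer_direction C x t"
  consider p where "p \<in> C" "c = - axis p 1"
    | a ps b where "(a, ps, b) \<in> C_chains C" "c = chain_normal a ps b"
    using assms(3) unfolding mem_chain_order_normals by blast
  then show ?thesis
  proof cases
    case 1
    then show ?thesis
      using assms(4) by (simp add: inner_axis' transfer_direction_def)
  next
    case 2
    note tight = chain_transfer_tight_chain[OF assms(1,2) 2(1) assms(4)[unfolded 2(2)]]
    have ab: "a \<notin> C" "b \<notin> C" and ps: "set ps \<subseteq> C" and chain: "cover_chain (a # ps)"
      using 2(1) by (simp_all add: C_chains_def cover_chain_snoc)
    have "sum_list (map (\<lambda>z. ?w $ z) ps) = sum_list (map (\<lambda>s. ?g (?T s) - ?g (?T s - x $ s)) ps)"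
      using ps by (intro arg_cong[where f = sum_list] map_cong) (auto simp: transfer_direction_def)
    also have "\<dots> = ?g (?T (last (a # ps))) - ?g (?T a)"
      by (rule chain_transfer_telescope[OF chain ps tight(1)])
    finally have "sum_list (map (\<lambda>z. ?w $ z) ps) = ?g (?T b) - ?g (?T a)"
      unfolding tight(2) .
    moreover have "?w $ a = ?g (?T a)" "?w $ b = ?g (?T b)"
      using ab by (simp_all add: transfer_direction_def)
    ultimately show ?thesis
      using 2 by (simp add: inner_chain_normal)
  qed
qed

lemma exists_nonintegral_chain_transfer:
  fixes C :: "'a::{finite,order} set"
  assumes "\<forall>p\<in>C. \<exists>q. covers q p" "x $ s \<notin> \<int>"
  obtains s0 where "chain_transfer C x s0 \<notin> \<int>"
proof (cases "s \<in> C")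
  case True
  then obtain q where "chain_transfer C x s = x $ s + chain_transfer C x q"
    using chain_transfer_attained[OF True] assms(1) by blast
  then have "x $ s = chain_transfer C x s - chain_transfer C x q"
    by simp
  then have "chain_transfer C x s \<notin> \<int> \<or> chain_transfer C x q \<notin> \<int>"
    using assms(2) Ints_diff by metis
  then show thesis
    using that by blast
next
  case False
  then show thesis
    using that[of s] assms(2) by (simp add: chain_transfer_not_in)
qed

lemma extreme_point_marked_chain_order_polytope_integral:
  fixes Pstar :: "'a::{finite,order} set"
  assumes "minimal_elems \<subseteq> Pstar" "Pstar \<union> Op = - C"
    and "y extreme_point_of marked_chain_order_polytope Pstar lam C Op"
  shows "integral_vec y"
proof (rule ccontr)
  let ?N = "chain_order_normals C" and ?base = "lift_marked Pstar lam 0"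
  let ?x = "lift_marked Pstar lam y"
  have Q: "marked_chain_order_polytope Pstar lam C Op = {y \<in> unmarked_space Pstar. \<forall>c\<in>?N. c \<bullet> (?base + y) \<le> 0}"
    by (rule marked_chain_order_polytope_halfspaces[OF assms(2)])
  have y: "y \<in> unmarked_space Pstar" "\<forall>c\<in>?N. c \<bullet> (?base + y) \<le> 0"
    using assms(3) unfolding Q extreme_point_of_def by blast+
  then have x: "?x = ?base + y"
    using lift_marked_eq_add by blast
  have disjoint: "Pstar \<inter> C = {}"
    using assms(2) by blast
  have lower_covers: "\<forall>p\<in>C. \<exists>q. covers q p"
    using assms(1) disjoint exists_lower_cover by blast
  assume "\<not> integral_vec y"
  then obtain s where "y $ s \<notin> \<int>"
    unfolding integral_vec_def by blast
  moreover have "s \<notin> Pstar"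
    using y(1) calculation by (auto simp: unmarked_space_def)
  ultimately have "?x $ s \<notin> \<int>"
    by (simp add: lift_marked_def)
  then obtain s0 where s0: "chain_transfer C ?x s0 \<notin> \<int>"
    using exists_nonintegral_chain_transfer[OF lower_covers] by blast
  define t where "t = frac (chain_transfer C ?x s0)"
  define w where "w = transfer_direction C ?x t"
  have "t \<noteq> 0"
    using s0 by (simp add: t_def)
  then have "w \<in> unmarked_space Pstar"
    unfolding w_def by (intro transfer_direction_in_unmarked_space disjoint) (simp add: lift_marked_def)
  moreover have "w \<noteq> 0"
    unfolding w_def using transfer_direction_nonzero[OF lower_covers t_def] .
  moreover have "\<forall>c\<in>?N. c \<bullet> (?base + y) = 0 \<longrightarrow> c \<bullet> w = 0"
    using transfer_direction_tight[OF lower_covers] y(2) unfolding w_def x by blast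
  ultimately have "\<not> y extreme_point_of {y \<in> unmarked_space Pstar. \<forall>c\<in>?N. c \<bullet> (?base + y) \<le> 0}"
    using y by (intro not_extreme_point_if_tight_direction subspace_unmarked_space finite_chain_order_normals)
  then show False
    using assms(3) Q by simp
qed

lemma marked_chain_order_polytope_coordinate_bound:
  fixes Pstar :: "'a::{finite,order} set"
  assumes "minimal_elems \<union> maximal_elems \<subseteq> Pstar" "Pstar \<union> Op = - C"
    and "y \<in> marked_chain_order_polytope Pstar lam C Op"
  shows "\<bar>y $ s\<bar> \<le> 2 * Max (range (\<lambda>a. \<bar>real_of_int (lam a)\<bar>))"
proof -
  define K where "K = Max (range (\<lambda>a. \<bar>real_of_int (lam a)\<bar>))"
  have K: "\<bar>real_of_int (lam a)\<bar> \<le> K" for a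
    unfolding K_def by (intro Max_ge) auto
  let ?x = "lift_marked Pstar lam y"
  have "?x \<in> marked_chain_order_polytope_full Pstar lam C Op"
    using assms(3) unfolding marked_chain_order_polytope_eq by blast
  then have marked: "\<forall>a\<in>Pstar. ?x $ a = of_int (lam a)"
    and normals: "\<forall>c\<in>chain_order_normals C. c \<bullet> ?x \<le> 0"
    unfolding mem_marked_chain_order_polytope_full[OF assms(2)] by blast+
  have chains: "sum_list (map (\<lambda>z. ?x $ z) ps) \<le> ?x $ b - ?x $ a" if "(a, ps, b) \<in> C_chains C" for a ps b
    using normals chain_normal_in_chain_order_normals[OF that] by (fastforce simp: inner_chain_normal)
  have nonneg: "0 \<le> ?x $ p" if "p \<in> C" for p
    using normals neg_axis_in_chain_order_normals[OF that] by (fastforce simp: inner_axis')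
  show ?thesis
  proof (cases "s \<in> Pstar")
    case True
    then show ?thesis
      using assms(3) K[of s] unfolding marked_chain_order_polytope_eq unmarked_space_def K_def[symmetric]
      by (auto intro: order_trans[OF abs_ge_zero])
  next
    case False
    obtain m M where mM: "m \<in> minimal_elems" "M \<in> maximal_elems"
      "s \<notin> C \<Longrightarrow> ?x $ m \<le> ?x $ s \<and> ?x $ s \<le> ?x $ M" "s \<in> C \<Longrightarrow> ?x $ s \<le> ?x $ M - ?x $ m"
      by (rule cover_chain_potential_bounds[OF chains nonneg]) (use assms in auto)
    then have "\<bar>?x $ s\<bar> \<le> \<bar>?x $ m\<bar> + \<bar>?x $ M\<bar>"
      using nonneg[of s] by (cases "s \<in> C") auto
    moreover have "\<bar>?x $ m\<bar> \<le> K" "\<bar>?x $ M\<bar> \<le> K"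
      using mM(1,2) assms(1) marked K by auto
    ultimately show ?thesis
      using False unfolding K_def[symmetric] by (simp add: lift_marked_def)
  qed
qed

lemma bounded_marked_chain_order_polytope:
  fixes Pstar :: "'a::{finite,order} set"
  assumes "minimal_elems \<union> maximal_elems \<subseteq> Pstar" "Pstar \<union> Op = - C"
  shows "bounded (marked_chain_order_polytope Pstar lam C Op)"
proof -
  define K where "K = 2 * Max (range (\<lambda>a. \<bar>real_of_int (lam a)\<bar>))"
  have "norm y \<le> CARD('a) * K" if "y \<in> marked_chain_order_polytope Pstar lam C Op" for y
  proof -
    have "norm y \<le> (\<Sum>i\<in>UNIV. \<bar>y $ i\<bar>)"
      by (rule norm_le_l1_cart)
    also have "\<dots> \<le> (\<Sum>i\<in>(UNIV::'a set). K)"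
      using marked_chain_order_polytope_coordinate_bound[OF assms that] unfolding K_def
      by (intro sum_mono) blast
    finally show ?thesis
      by simp
  qed
  then show ?thesis
    unfolding bounded_iff by blast
qed

lemma lattice_polytope_marked_chain_order_polytope:
  fixes Pstar :: "'a::{finite,order} set"
  assumes "minimal_elems \<union> maximal_elems \<subseteq> Pstar" "Pstar \<union> Op = - C"
  shows "lattice_polytope (marked_chain_order_polytope Pstar lam C Op)"
proof (rule lattice_polytope_if_extreme_points_integral)
  show "polyhedron (marked_chain_order_polytope Pstar lam C Op)"
    unfolding marked_chain_order_polytope_halfspaces[OF assms(2)]
    by (intro polyhedron_halfspaces_in_subspace subspace_unmarked_space finite_chain_order_normals)
  show "bounded (marked_chain_order_polytope Pstar lam C Op)"
    by (rule bounded_marked_chain_order_polytope[OF assms])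
  show "integral_vec y" if "y extreme_point_of marked_chain_order_polytope Pstar lam C Op" for y
    using extreme_point_marked_chain_order_polytope_integral that assms by blast
qed

section \<open>Ranked markings\<close>

text \<open>Every defining inequality has slack exactly \<open>1\<close> at this point.\<close>
definition rank_point :: "'a set \<Rightarrow> 'a set \<Rightarrow> ('a \<Rightarrow> int) \<Rightarrow> (real, 'a::finite) vec" where
  "rank_point Pstar C r = (\<chi> s. if s \<in> Pstar then 0 else if s \<in> C then 1 else of_int (r s))"

lemma rank_point_in_unmarked_space: "rank_point Pstar C r \<in> unmarked_space Pstar"
  by (simp add: rank_point_def unmarked_space_def)

lemma integral_rank_point: "integral_vec (rank_point Pstar C r)"
  by (simp add: rank_point_def integral_vec_def)

lemma inner_lift_rank_point:
  fixes Pstar :: "'a::{finite,order} set"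
  assumes "rank_function r" "\<forall>a\<in>Pstar. lam a = r a" "Pstar \<union> Op = - C"
    and "c \<in> chain_order_normals C"
  shows "c \<bullet> lift_marked Pstar lam (rank_point Pstar C r) = -1"
proof -
  let ?u = "lift_marked Pstar lam (rank_point Pstar C r)"
  have u: "?u $ s = (if s \<in> C then 1 else of_int (r s))" for s
    using assms(2,3) by (auto simp: lift_marked_def rank_point_def)
  consider p where "p \<in> C" "c = - axis p 1"
    | a ps b where "(a, ps, b) \<in> C_chains C" "c = chain_normal a ps b"
    using assms(4) unfolding mem_chain_order_normals by blast
  then show ?thesis
  proof cases
    case 1
    then show ?thesis by (simp add: inner_axis' u)
  next
    case 2
    then have "r b = r a + int (length ps) + 1"
      using rank_function_cover_chain[OF assms(1), of a "ps @ [b]"] unfolding C_chains_def by simp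
    moreover have "set ps \<subseteq> C"
      using 2 unfolding C_chains_def by simp
    then have "sum_list (map (\<lambda>z. ?u $ z) ps) = real (length ps)"
      by (induction ps) (auto simp: u)
    ultimately show ?thesis
      using 2 unfolding C_chains_def by (simp add: inner_chain_normal u)
  qed
qed

lemma translate_rank_point_halfspaces:
  fixes Pstar :: "'a::{finite,order} set"
  assumes "rank_function r" "\<forall>a\<in>Pstar. lam a = r a" "Pstar \<union> Op = - C"
  shows "(\<lambda>x. x - rank_point Pstar C r) ` marked_chain_order_polytope Pstar lam C Op =
    {y \<in> unmarked_space Pstar. \<forall>c\<in>proj_unmarked Pstar ` chain_order_normals C. c \<bullet> y \<le> 1}"
  unfolding translate_marked_chain_order_polytope[OF assms(3) rank_point_in_unmarked_space]
  using inner_lift_rank_point[OF assms] by (auto simp: inner_add_right inner_proj_unmarked)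

lemma reflexive_translate_rank_point:
  fixes Pstar :: "'a::{finite,order} set"
  assumes "minimal_elems \<union> maximal_elems \<subseteq> Pstar" "regular_marked Pstar lam"
    and "rank_function r" "\<forall>a\<in>Pstar. lam a = r a" "Pstar \<union> Op = - C"
  shows "reflexive_polytope Pstar ((\<lambda>x. x - rank_point Pstar C r) ` marked_chain_order_polytope Pstar lam C Op)"
  unfolding reflexive_polytope_def
proof (intro conjI)
  show "0 \<in> interior_in Pstar ((\<lambda>x. x - rank_point Pstar C r) ` marked_chain_order_polytope Pstar lam C Op)"
    unfolding interior_translate_marked_chain_order_polytope[OF assms(2,5) rank_point_in_unmarked_space]
    using inner_lift_rank_point[OF assms(3-5)] zero_in_unmarked_space by simp
  show "lattice_polytope ((\<lambda>x. x - rank_point Pstar C r) ` marked_chain_order_polytope Pstar lam C Op)"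
    using lattice_polytope_marked_chain_order_polytope[OF assms(1,5)] integral_rank_point
    by (rule lattice_polytope_translate)
  let ?A = "proj_unmarked Pstar ` chain_order_normals C"
  have "?A \<subseteq> unmarked_space Pstar"
    using proj_unmarked_in_unmarked_space by blast
  then have "polar_dual Pstar ((\<lambda>x. x - rank_point Pstar C r) ` marked_chain_order_polytope Pstar lam C Op)
      = convex hull (insert 0 ?A)"
    unfolding translate_rank_point_halfspaces[OF assms(3-5)]
    by (intro polar_dual_halfspaces finite_imageI finite_chain_order_normals)
  moreover have "\<forall>v\<in>insert 0 ?A. integral_vec v"
    using integral_chain_order_normals by (auto simp: integral_vec_def proj_unmarked_def)
  ultimately show "lattice_polytope (polar_dual Pstar
      ((\<lambda>x. x - rank_point Pstar C r) ` marked_chain_order_polytope Pstar lam C Op))"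
    unfolding lattice_polytope_def by (meson finite_chain_order_normals finite_imageI finite_insert)
qed

text \<open>At an interior lattice point every inequality has slack at least \<open>1\<close>; summed along a maximal
  chain, whose ends are marked with their ranks, these slacks add up to exactly the length of the chain.\<close>
lemma interior_lattice_point_eq_rank_point:
  fixes Pstar :: "'a::{finite,order} set"
  assumes "minimal_elems \<union> maximal_elems \<subseteq> Pstar" "regular_marked Pstar lam"
    and "rank_function r" "\<forall>a\<in>Pstar. lam a = r a" "Pstar \<union> Op = - C"
    and "v \<in> interior_in Pstar (marked_chain_order_polytope Pstar lam C Op)" "integral_vec v"
  shows "v = rank_point Pstar C r"
proof -
  let ?x = "lift_marked Pstar lam v"
  have v: "v \<in> unmarked_space Pstar" and strict: "\<forall>c\<in>chain_order_normals C. c \<bullet> ?x < 0"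
    using assms(6) unfolding mem_interior_marked_chain_order_polytope[OF assms(2,5)] by blast+
  have slack: "c \<bullet> ?x \<le> -1" if c: "c \<in> chain_order_normals C" for c
  proof -
    obtain k where "c \<bullet> ?x = of_int k"
      using inner_integral_vec_in_Ints[OF integral_chain_order_normals[OF c]
          integral_vec_lift_marked[OF assms(7), of Pstar lam]] by (auto elim: Ints_cases)
    then show ?thesis
      using strict c by force
  qed
  have C_ge: "0 \<le> ?x $ p - 1" if "p \<in> C" for p
    using slack[OF neg_axis_in_chain_order_normals[OF that]] by (simp add: inner_axis')
  have chains: "sum_list (map (\<lambda>z. ?x $ z - 1) ps) \<le> (?x $ b - r b) - (?x $ a - r a)"
    if "(a, ps, b) \<in> C_chains C" for a ps b
  proof -
    have "r b = r a + int (length ps) + 1"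
      using rank_function_cover_chain[OF assms(3), of a "ps @ [b]"] that unfolding C_chains_def by simp
    moreover have "sum_list (map (\<lambda>z. ?x $ z - 1) ps) = sum_list (map (\<lambda>z. ?x $ z) ps) - length ps"
      by (induction ps) auto
    ultimately show ?thesis
      using slack[OF chain_normal_in_chain_order_normals[OF that]] by (simp add: inner_chain_normal)
  qed
  have disjoint: "minimal_elems \<inter> C = {}" "maximal_elems \<inter> C = {}"
    using assms(1,5) by blast+
  have marked: "?x $ a - r a = 0" if "a \<in> Pstar" for a
    using that assms(4) by (simp add: lift_marked_def)
  show ?thesis
  proof (rule vec_eq_iff[THEN iffD2, rule_format])
    fix s
    obtain m M where mM: "m \<in> minimal_elems" "M \<in> maximal_elems"
      "s \<notin> C \<Longrightarrow> ?x $ m - r m \<le> ?x $ s - r s \<and> ?x $ s - r s \<le> ?x $ M - r M"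
      "s \<in> C \<Longrightarrow> ?x $ s - 1 \<le> (?x $ M - r M) - (?x $ m - r m)"
      using cover_chain_potential_bounds[where f = "\<lambda>z. ?x $ z - 1" and v = "\<lambda>z. ?x $ z - r z" and s = s,
          OF chains C_ge disjoint] by blast
    moreover have "?x $ m - r m = 0" "?x $ M - r M = 0"
      using mM(1,2) marked assms(1) by blast+
    ultimately have "s \<notin> C \<Longrightarrow> ?x $ s = r s" "s \<in> C \<Longrightarrow> ?x $ s = 1"
      using C_ge[of s] by auto
    then show "v $ s = rank_point Pstar C r $ s"
      using v by (auto simp: rank_point_def unmarked_space_def lift_marked_def split: if_splits)
  qed
qed

lemma ranked_imp_unique_interior_lattice_point_reflexive:
  fixes Pstar :: "'a::{finite,order} set"
  assumes "minimal_elems \<union> maximal_elems \<subseteq> Pstar" "regular_marked Pstar lam"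
    and "rank_function r" "\<forall>a\<in>Pstar. lam a = r a" "Pstar \<union> Op = - C"
  shows "{v \<in> interior_in Pstar (marked_chain_order_polytope Pstar lam C Op). integral_vec v}
      = {rank_point Pstar C r}
    \<and> reflexive_polytope Pstar ((\<lambda>x. x - rank_point Pstar C r) ` marked_chain_order_polytope Pstar lam C Op)"
proof
  have "rank_point Pstar C r \<in> interior_in Pstar (marked_chain_order_polytope Pstar lam C Op)"
    unfolding mem_interior_marked_chain_order_polytope[OF assms(2,5)]
    using rank_point_in_unmarked_space inner_lift_rank_point[OF assms(3-5)] by simp
  then show "{v \<in> interior_in Pstar (marked_chain_order_polytope Pstar lam C Op). integral_vec v}
      = {rank_point Pstar C r}"
    using interior_lattice_point_eq_rank_point[OF assms] integral_rank_point by blast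
qed (rule reflexive_translate_rank_point[OF assms])

lemma ranked_imp_reflexive_translates:
  fixes Pstar :: "'a::{finite,order} set"
  assumes "minimal_elems \<union> maximal_elems \<subseteq> Pstar" "regular_marked Pstar lam"
    and "ranked TYPE('a) \<and> (\<exists>r. rank_function r \<and> (\<forall>a\<in>Pstar. lam a = r a))"
  shows "\<forall>C Op. C \<inter> Op = {} \<and> C \<union> Op = - Pstar \<longrightarrow>
    (\<exists>u. {v \<in> interior_in Pstar (marked_chain_order_polytope Pstar lam C Op). integral_vec v} = {u}
      \<and> reflexive_polytope Pstar ((\<lambda>x. x - u) ` marked_chain_order_polytope Pstar lam C Op))"
    (is "\<forall>C Op. _ \<longrightarrow> (\<exists>u. ?good C Op u)")
proof (intro allI impI)
  fix C Op :: "'a set"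
  assume "C \<inter> Op = {} \<and> C \<union> Op = - Pstar"
  then have "Pstar \<union> Op = - C"
    by blast
  moreover obtain r where r: "rank_function r" "\<forall>a\<in>Pstar. lam a = r a"
    using assms(3) by blast
  ultimately have "?good C Op (rank_point Pstar C r)"
    using ranked_imp_unique_interior_lattice_point_reflexive[OF assms(1,2)] by blast
  then show "\<exists>u. ?good C Op u" ..
qed

section \<open>Reflexivity forces a rank function\<close>

text \<open>The preorder generated by the order and \<open>q \<le> p\<close>.\<close>
definition glued_le :: "'a::order \<Rightarrow> 'a \<Rightarrow> 'a \<Rightarrow> 'a \<Rightarrow> bool" where
  "glued_le p q s t \<longleftrightarrow> s \<le> t \<or> (s \<le> q \<and> p \<le> t)"

lemma reflp_glued_le: "reflp (glued_le p q)"
  by (simp add: reflp_def glued_le_def)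

lemma transp_glued_le: "transp (glued_le p q)"
  unfolding transp_def glued_le_def by (auto intro: order_trans)

lemma glued_le_covers:
  assumes "covers p q" "covers a b" "(a, b) \<noteq> (p, q)"
  shows "glued_le p q a b" "\<not> glued_le p q b a"
proof -
  show "glued_le p q a b"
    using covers_imp_less[OF assms(2)] unfolding glued_le_def by (simp add: less_imp_le)
  show "\<not> glued_le p q b a"
  proof
    assume "glued_le p q b a"
    then have "b \<le> q" "p \<le> a"
      using covers_imp_less[OF assms(2)] unfolding glued_le_def by auto
    then have "a = p" "b = q"
      using assms(1,2) unfolding covers_def
      by (metis order.not_eq_order_implies_strict order.strict_trans1 order.strict_trans2)+
    then show False
      using assms(3) by simp
  qed
qed

lemma exists_point_tight_only_at_cover:
  fixes Pstar :: "'a::{finite,order} set"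
  assumes "minimal_elems \<union> maximal_elems \<subseteq> Pstar" "order_preserving_marking Pstar lam"
    and "regular_marked Pstar lam" "covers p q"
  obtains X :: "(real, 'a) vec" where "\<forall>a\<in>Pstar. X $ a = of_int (lam a)" "X $ p = X $ q"
    "\<And>a b. covers a b \<Longrightarrow> (a, b) \<noteq> (p, q) \<Longrightarrow> X $ a < X $ b"
proof -
  have regular: "a = b \<or> lam a < lam b" if "a \<in> Pstar" "b \<in> Pstar" "a \<le> q" "p \<le> b" for a b
    using assms(3,4) that unfolding regular_marked_def by blast
  have "\<exists>a\<in>Pstar. glued_le p q a s" "\<exists>b\<in>Pstar. glued_le p q s b" for s
    using exists_minimal_below[of s] exists_maximal_above[of s] assms(1) unfolding glued_le_def by blast+
  moreover have "real_of_int (lam a) \<le> real_of_int (lam b)"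
    if "a \<in> Pstar" "b \<in> Pstar" "glued_le p q a b" for a b
    using that regular assms(2) unfolding glued_le_def order_preserving_marking_def by fastforce
  moreover have "real_of_int (lam a) < real_of_int (lam b)"
    if "a \<in> Pstar" "b \<in> Pstar" "glued_le p q a b" "\<not> glued_le p q b a" for a b
    using that regular regular_marked_less[OF assms(3)] unfolding glued_le_def by fastforce
  ultimately have "\<exists>x. (\<forall>a\<in>Pstar. x a = real_of_int (lam a)) \<and> (\<forall>s t. glued_le p q s t \<longrightarrow> x s \<le> x t)
      \<and> (\<forall>s t. glued_le p q s t \<and> \<not> glued_le p q t s \<longrightarrow> x s < x t)"
    by (rule strict_mono_extension[OF reflp_glued_le transp_glued_le])
  then obtain x where x: "\<And>a. a \<in> Pstar \<Longrightarrow> x a = real_of_int (lam a)"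
    "\<And>s t. glued_le p q s t \<Longrightarrow> x s \<le> x t"
    "\<And>s t. glued_le p q s t \<Longrightarrow> \<not> glued_le p q t s \<Longrightarrow> x s < x t"
    by blast
  have "x p = x q"
    using x(2)[of p q] x(2)[of q p] covers_imp_less[OF assms(4)] unfolding glued_le_def by simp
  moreover have "x a < x b" if "covers a b" "(a, b) \<noteq> (p, q)" for a b
    using x(3) glued_le_covers[OF assms(4) that] by blast
  ultimately show thesis
    using that[of "\<chi> s. x s"] x(1) by simp
qed

lemma exists_cover_facet_relative_interior_point:
  fixes Pstar :: "'a::{finite,order} set"
  assumes "minimal_elems \<union> maximal_elems \<subseteq> Pstar" "order_preserving_marking Pstar lam"
    and "regular_marked Pstar lam" "covers p q" "u \<in> unmarked_space Pstar"
  defines "S \<equiv> (\<lambda>x. x - u) ` marked_chain_order_polytope Pstar lam {} (- Pstar)"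
  obtains z where "z \<in> S" "chain_normal p [] q \<bullet> (lift_marked Pstar lam u + z) = 0"
    "\<And>w. w \<in> unmarked_space Pstar \<Longrightarrow> chain_normal p [] q \<bullet> w = 0 \<Longrightarrow> \<exists>\<tau>>0. z + \<tau> *\<^sub>R w \<in> S"
proof -
  let ?u = "lift_marked Pstar lam u" and ?N = "chain_order_normals {} :: (real, 'a) vec set"
  have S: "S = {y \<in> unmarked_space Pstar. \<forall>c\<in>?N. c \<bullet> (?u + y) \<le> 0}"
    unfolding S_def using translate_marked_chain_order_polytope[of Pstar "- Pstar" "{}", OF _ assms(5)] by simp
  obtain X :: "(real, 'a) vec" where X: "\<forall>a\<in>Pstar. X $ a = of_int (lam a)" "X $ p = X $ q"
    "\<And>a b. covers a b \<Longrightarrow> (a, b) \<noteq> (p, q) \<Longrightarrow> X $ a < X $ b"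
    using exists_point_tight_only_at_cover[OF assms(1-4)] by blast
  have X_normals: "\<forall>c\<in>?N. c \<bullet> X \<le> 0" and X_tight: "\<forall>c\<in>?N. c \<bullet> X = 0 \<longrightarrow> c = chain_normal p [] q"
    using X(2,3) by (fastforce simp: chain_order_normals_empty inner_chain_normal)+
  define z where "z = proj_unmarked Pstar X - u"
  have z: "z \<in> unmarked_space Pstar"
    unfolding z_def using subspace_diff[OF subspace_unmarked_space proj_unmarked_in_unmarked_space assms(5)] .
  have "?u + z = lift_marked Pstar lam (u + z)"
    using lift_marked_add[OF z, of lam u] by simp
  also have "\<dots> = X"
    using lift_proj_unmarked[OF X(1)] by (simp add: z_def)
  finally have uz: "?u + z = X" .
  show thesis
  proof
    show "z \<in> S"
      unfolding S using z uz X_normals by simp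
    show "chain_normal p [] q \<bullet> (?u + z) = 0"
      using uz X(2) by (simp add: inner_chain_normal)
    fix w assume w: "w \<in> unmarked_space Pstar" "chain_normal p [] q \<bullet> w = 0"
    then have "\<forall>c\<in>?N. c \<bullet> X = 0 \<longrightarrow> c \<bullet> w = 0"
      using X_tight by auto
    then obtain d where d: "d > 0" "\<And>\<tau>. \<bar>\<tau>\<bar> \<le> d \<Longrightarrow> \<forall>c\<in>?N. c \<bullet> (X + \<tau> *\<^sub>R w) \<le> 0"
      using tight_direction_perturbation[OF finite_chain_order_normals X_normals] by blast
    have "z + d *\<^sub>R w \<in> S"
      unfolding S using d(2)[of d] d(1) z uz w(1)
      by (auto simp: add.assoc subspace_add subspace_scale subspace_unmarked_space)
    then show "\<exists>\<tau>>0. z + \<tau> *\<^sub>R w \<in> S"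
      using d(1) by blast
  qed
qed

lemma extreme_point_polar_dual_cover_normal:
  fixes Pstar :: "'a::{finite,order} set"
  assumes "minimal_elems \<union> maximal_elems \<subseteq> Pstar" "order_preserving_marking Pstar lam"
    and "regular_marked Pstar lam" "covers p q" "u \<in> unmarked_space Pstar"
    and D: "D = lift_marked Pstar lam u $ q - lift_marked Pstar lam u $ p" "D > 0"
  shows "(1 / D) *\<^sub>R proj_unmarked Pstar (chain_normal p [] q) extreme_point_of
    polar_dual Pstar ((\<lambda>x. x - u) ` marked_chain_order_polytope Pstar lam {} (- Pstar))"
proof -
  let ?S = "(\<lambda>x. x - u) ` marked_chain_order_polytope Pstar lam {} (- Pstar)"
  let ?u = "lift_marked Pstar lam u" and ?c = "chain_normal p [] q"
  have l: "proj_unmarked Pstar ?c \<bullet> w = ?c \<bullet> w" if "w \<in> unmarked_space Pstar" for w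
    using inner_proj_unmarked[OF that] .
  have c_u: "?c \<bullet> ?u = - D"
    using D(1) by (simp add: inner_chain_normal)
  have S: "?S = {y \<in> unmarked_space Pstar. \<forall>c\<in>chain_order_normals {}. c \<bullet> (?u + y) \<le> 0}"
    using translate_marked_chain_order_polytope[of Pstar "- Pstar" "{}", OF _ assms(5)] by simp
  have "?c \<in> chain_order_normals {}"
    using assms(4) by (auto simp: chain_order_normals_empty)
  then have "?c \<bullet> (?u + y) \<le> 0" "y \<in> unmarked_space Pstar" if "y \<in> ?S" for y
    using that unfolding S by blast+
  then have bound: "\<forall>y\<in>?S. proj_unmarked Pstar ?c \<bullet> y \<le> D"
    using c_u l by (simp add: inner_add_right)
  obtain z where z: "z \<in> ?S" "?c \<bullet> (?u + z) = 0"
    "\<And>w. w \<in> unmarked_space Pstar \<Longrightarrow> ?c \<bullet> w = 0 \<Longrightarrow> \<exists>\<tau>>0. z + \<tau> *\<^sub>R w \<in> ?S"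
    using exists_cover_facet_relative_interior_point[OF assms(1-5)] by blast
  have "z \<in> unmarked_space Pstar"
    using z(1) unfolding S by blast
  then have "proj_unmarked Pstar ?c \<bullet> z = D"
    using z(2) c_u l by (simp add: inner_add_right)
  then show ?thesis
    using extreme_point_polar_dual_facet_normal[OF proj_unmarked_in_unmarked_space D(2) bound z(1)] z(3) l
    by simp
qed

lemma reflexive_imp_unit_cover_gap:
  fixes Pstar :: "'a::{finite,order} set"
  assumes "minimal_elems \<union> maximal_elems \<subseteq> Pstar" "order_preserving_marking Pstar lam"
    and "regular_marked Pstar lam" "covers p q"
    and u: "u \<in> interior_in Pstar (marked_chain_order_polytope Pstar lam {} (- Pstar))" "integral_vec u"
    and reflexive: "reflexive_polytope Pstar ((\<lambda>x. x - u) ` marked_chain_order_polytope Pstar lam {} (- Pstar))"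
  shows "lift_marked Pstar lam u $ q = lift_marked Pstar lam u $ p + 1"
proof -
  let ?u = "lift_marked Pstar lam u" and ?l = "proj_unmarked Pstar (chain_normal p [] q)"
  define D where "D = ?u $ q - ?u $ p"
  have "Pstar \<union> - Pstar = - {}"
    by simp
  then have u_U: "u \<in> unmarked_space Pstar" and "\<forall>c\<in>chain_order_normals {}. c \<bullet> ?u < 0"
    using u(1) mem_interior_marked_chain_order_polytope[OF assms(3)] by blast+
  then have "D > 0"
    using assms(4) by (force simp: D_def chain_order_normals_empty inner_chain_normal)
  moreover have "D \<in> \<int>"
    using integral_vec_lift_marked[OF u(2)] by (simp add: D_def integral_vec_def Ints_diff)
  ultimately have "1 \<le> D"
    by (auto elim: Ints_cases)
  obtain V where V: "\<forall>v\<in>V. integral_vec v"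
    "polar_dual Pstar ((\<lambda>x. x - u) ` marked_chain_order_polytope Pstar lam {} (- Pstar)) = convex hull V"
    using reflexive unfolding reflexive_polytope_def lattice_polytope_def by blast
  then have "integral_vec ((1 / D) *\<^sub>R ?l)"
    using extreme_point_polar_dual_cover_normal[OF assms(1-4) u_U D_def \<open>D > 0\<close>]
    by (metis extreme_point_of_convex_hull)
  then have "(1 / D) * ?l $ p \<in> \<int>" "(1 / D) * ?l $ q \<in> \<int>"
    by (simp_all add: integral_vec_def)
  moreover have "?l $ p = 1 \<or> ?l $ q = - 1"
    using regular_marked_covers[OF assms(3,4)] covers_imp_less[OF assms(4)]
    by (auto simp: proj_unmarked_def chain_normal_def)
  ultimately have "1 / D \<in> \<int>"
    using Ints_minus by force
  then obtain k where k: "1 / D = of_int k"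
    by (auto elim: Ints_cases)
  moreover have "0 < 1 / D" "1 / D \<le> 1"
    using \<open>1 \<le> D\<close> by simp_all
  ultimately have "1 / D = 1"
    by simp
  then have "D = 1"
    by simp
  then show ?thesis
    by (simp add: D_def)
qed

lemma reflexive_translates_imp_ranked:
  fixes Pstar :: "'a::{finite,order} set"
  assumes "minimal_elems \<union> maximal_elems \<subseteq> Pstar" "order_preserving_marking Pstar lam"
    and "regular_marked Pstar lam"
    and "\<forall>C Op. C \<inter> Op = {} \<and> C \<union> Op = - Pstar \<longrightarrow>
      (\<exists>u. {v \<in> interior_in Pstar (marked_chain_order_polytope Pstar lam C Op). integral_vec v} = {u}
        \<and> reflexive_polytope Pstar ((\<lambda>x. x - u) ` marked_chain_order_polytope Pstar lam C Op))"
  shows "ranked TYPE('a) \<and> (\<exists>r. rank_function r \<and> (\<forall>a\<in>Pstar. lam a = r a))"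
proof -
  obtain u where u: "u \<in> interior_in Pstar (marked_chain_order_polytope Pstar lam {} (- Pstar))" "integral_vec u"
    and reflexive: "reflexive_polytope Pstar ((\<lambda>x. x - u) ` marked_chain_order_polytope Pstar lam {} (- Pstar))"
    using spec[OF spec[OF assms(4), of "{}"], of "- Pstar"] by auto
  define r where "r s = \<lfloor>lift_marked Pstar lam u $ s\<rfloor>" for s
  have u_r: "lift_marked Pstar lam u $ s = of_int (r s)" for s
    using integral_vec_lift_marked[OF u(2)] unfolding r_def integral_vec_def
    by (metis floor_of_int Ints_cases)
  have "rank_function r"
    unfolding rank_function_def
    using reflexive_imp_unit_cover_gap[OF assms(1-3) _ u reflexive] u_r by fastforce
  moreover have "lam a = r a" if "a \<in> Pstar" for a
    using u_r[of a] that by (simp add: lift_marked_def)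
  ultimately show ?thesis
    unfolding ranked_def by blast
qed

theorem theorem3p4:
  fixes Pstar :: "'a::{finite,order} set" and lam :: "'a \<Rightarrow> int"
  assumes "minimal_elems \<union> maximal_elems \<subseteq> Pstar"
    and "order_preserving_marking Pstar lam"
    and "regular_marked Pstar lam"
  shows "(ranked TYPE('a) \<and> (\<exists>r. rank_function r \<and> (\<forall>a\<in>Pstar. lam a = r a)))
     \<longleftrightarrow>
     (\<forall>C Op. C \<inter> Op = {} \<and> C \<union> Op = - Pstar \<longrightarrow>
        (\<exists>u. {v \<in> interior_in Pstar (marked_chain_order_polytope Pstar lam C Op).
                 integral_vec v} = {u}
           \<and> reflexive_polytope Pstar ((\<lambda>x. x - u) ` marked_chain_order_polytope Pstar lam C Op)))"
  by (rule iffI[OF ranked_imp_reflexive_translates[OF assms(1,3)] reflexive_translates_imp_ranked[OF assms]])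

end
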